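(* Let $n,r\ge3$ and let $X$ be the real algebraic variety of $r$-tuples $\{(L_i,H_i)\}_{i=1,\dots,r}$ of flags in $\mathbb{R}^n$ consisting of a line $L_i$ and a hyperplane $H_i\supset L_i$, with the action of $\mathrm{SL}_{n,\mathbb{R}}$. Let $U(\mathbb{R})$ be the set of real $r$-tuples whose complexification is in general position, and let $\theta\colon U(\mathbb{R})/\mathrm{SL}_n(\mathbb{R})\to\mathbb{P}^{!r-1}(\mathbb{R})$ be the map induced by $x\mapsto[s_{\sigma_1}(x):\dots:s_{\sigma_{!r}}(x)]$, where $\sigma_1,\dots,\sigma_{!r}$ are the derangements of $\{1,\dots,r\}$. Then $\theta$ is injective if $n$ is odd or $n>r$, and $\theta$ is two-to-one if $n\le r$ and $n$ is even.
   Context: For a derangement (fixed-point-free permutation) $\sigma$, $s_\sigma(x)=\prod_{i=1}^r\phi_i(v_{\sigma(i)})$, where $v_i$ generates $L_i$ and $\phi_i$ is a (real) linear form with kernel $H_i$; the point $[s_\sigma(x)]_\sigma$ does not depend on these choices, and $!r$ is the number of derangements. General position (for complex flags in $\mathbb{C}^n$): if $n\ge r$, $\dim(L_1+\dots+L_r)=r$, $\dim(H_1\cap\dots\cap H_r)=n-r$, $L_i\cap H_j=0$ for $i\ne j$, and $(L_1+\dots+L_r)\cap(H_1\cap\dots\cap H_r)=0$; if $n<r$, every sub-$n$-tuple indexed by an $n$-element subset of $\{1,\dots,r\}$ satisfies these conditions. $U(\mathbb{R})/\mathrm{SL}_n(\mathbb{R})$ is the set of $\mathrm{SL}_n(\mathbb{R})$-orbits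 in $U(\mathbb{R})$ (these are closed orbits among real semi-stable points). *)

theory Defs
  imports "HOL-Analysis.Analysis"
begin

text \<open>A point x of X is an r-tuple of flags (L_i, H_i), i = 1..r, in R^n, where
  n = CARD('n). We store it as a pair of functions (L, H) on indices; only the
  indices 1..r are meaningful.\<close>

type_synonym 'n flagtuple = "(nat \<Rightarrow> (real^'n) set) \<times> (nat \<Rightarrow> (real^'n) set)"

definition flag_tuple :: "nat \<Rightarrow> 'n::finite flagtuple \<Rightarrow> bool" where
  "flag_tuple r x \<longleftrightarrow> (\<forall>i\<in>{1..r}.
      subspace (fst x i) \<and> dim (fst x i) = 1 \<and>
      subspace (snd x i) \<and> dim (snd x i) = CARD('n) - 1 \<and>
      fst x i \<subseteq> snd x i)"

definition cvec :: "real^'n \<Rightarrow> complex^'n" where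
  "cvec v = (\<chi> j. complex_of_real (v $ j))"

definition cspan :: "(complex^'n) set \<Rightarrow> (complex^'n) set" where
  "cspan S = {z. \<exists>B c. finite B \<and> B \<subseteq> S \<and> z = (\<Sum>b\<in>B. c b *s b)}"

definition cdim :: "(complex^'n) set \<Rightarrow> nat" where
  "cdim V = (LEAST k. \<exists>B. finite B \<and> card B = k \<and> B \<subseteq> V \<and> cspan B = V)"

definition cx :: "(real^'n) set \<Rightarrow> (complex^'n) set" where
  "cx S = cspan (cvec ` S)"

definition gp_sub :: "'n::finite flagtuple \<Rightarrow> nat set \<Rightarrow> bool" where
  "gp_sub x I \<longleftrightarrow>
     cdim (cspan (\<Union>i\<in>I. cx (fst x i))) = card I \<and>
     cdim (\<Inter>i\<in>I. cx (snd x i)) = CARD('n) - card I \<and>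
     (\<forall>i\<in>I. \<forall>j\<in>I. i \<noteq> j \<longrightarrow> cx (fst x i) \<inter> cx (snd x j) = {0}) \<and>
     cspan (\<Union>i\<in>I. cx (fst x i)) \<inter> (\<Inter>i\<in>I. cx (snd x i)) = {0}"

definition gen_pos :: "nat \<Rightarrow> 'n::finite flagtuple \<Rightarrow> bool" where
  "gen_pos r x \<longleftrightarrow>
     (if CARD('n) \<ge> r then gp_sub x {1..r}
      else (\<forall>S\<subseteq>{1..r}. card S = CARD('n) \<longrightarrow> gp_sub x S))"

definition U :: "nat \<Rightarrow> 'n::finite flagtuple set" where
  "U r = {x. flag_tuple r x \<and> gen_pos r x}"

definition same_orbit :: "nat \<Rightarrow> 'n::finite flagtuple \<Rightarrow> 'n flagtuple \<Rightarrow> bool" where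
  "same_orbit r x y \<longleftrightarrow> (\<exists>g :: real^'n^'n. det g = 1 \<and>
      (\<forall>i\<in>{1..r}. fst y i = (\<lambda>v. g *v v) ` fst x i \<and> snd y i = (\<lambda>v. g *v v) ` snd x i))"

definition derangements :: "nat \<Rightarrow> (nat \<Rightarrow> nat) set" where
  "derangements r = {\<sigma>. \<sigma> permutes {1..r} \<and> (\<forall>i\<in>{1..r}. \<sigma> i \<noteq> i)}"

definition lgen :: "(real^'n) set \<Rightarrow> real^'n" where
  "lgen L = (SOME v. v \<in> L \<and> v \<noteq> 0)"

definition lform :: "(real^'n) set \<Rightarrow> (real^'n \<Rightarrow> real)" where
  "lform H = (SOME f. linear f \<and> {v. f v = 0} = H)"

definition s_coord :: "nat \<Rightarrow> 'n::finite flagtuple \<Rightarrow> (nat \<Rightarrow> nat) \<Rightarrow> real" where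
  "s_coord r x \<sigma> = (\<Prod>i\<in>{1..r}. lform (snd x i) (lgen (fst x (\<sigma> i))))"

text \<open>theta x = theta y in P^{!r-1}(R): the vectors (s_sigma)_sigma are proportional.\<close>

definition theta_eq :: "nat \<Rightarrow> 'n::finite flagtuple \<Rightarrow> 'n flagtuple \<Rightarrow> bool" where
  "theta_eq r x y \<longleftrightarrow> (\<exists>c::real. c \<noteq> 0 \<and>
      (\<forall>\<sigma>\<in>derangements r. s_coord r y \<sigma> = c * s_coord r x \<sigma>))"

end

theory Submission
  imports Defs "HOL-Combinatorics.Cycles"
begin

text \<open>Choose generators v_j of the lines and forms \<phi>_i with kernels the hyperplanes, and put
  q_ij = \<phi>_i(v_j); general position makes q_ij \<noteq> 0 for i \<noteq> j, while q_ii = 0. If \<theta>(x) = \<theta>(z),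
  the ratios of the q's of z and of x have the same product along every derangement. Comparing
  derangements that differ by a transposition (or the two 3-cycles when r = 3) shows that this
  ratio matrix has rank one off the diagonal, i.e. z is obtained from x by rescaling the v_j and
  the \<phi>_i. Such a rescaling is realised by some g \<in> GL_n(R), defined on a basis among the v_j when
  n \<le> r, and on the v_j together with a basis of the common kernel of the \<phi>_i when n > r.

  Dividing g by a real n-th root of det g puts it into SL_n(R) whenever n is odd or det g > 0;
  when n > r the sign of det g can be corrected by a map fixing x that scales the common kernel.
  When n \<le> r is even, the stabilizer of x in GL_n(R) consists of scalars, which have positive
  determinant; so x and its image under a reflection lie in different SL_n(R)-orbits with the
  same \<theta>, and every other configuration with this \<theta> lies in one of these two orbits.\<close>

section \<open>Complexification\<close>

lemma cspan_eq_span: "cspan S = vec.span S"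
  by (auto simp: cspan_def vec.span_explicit)

lemma cdim_eq_dim:
  assumes "vec.subspace V"
  shows "cdim V = vec.dim V"
  unfolding cdim_def
proof (rule Least_equality)
  obtain B where B: "B \<subseteq> V" "vec.independent B" "V \<subseteq> vec.span B" "card B = vec.dim V"
    using vec.basis_exists by blast
  then have "vec.span B = V"
    using assms vec.span_minimal by blast
  then show "\<exists>B. finite B \<and> card B = vec.dim V \<and> B \<subseteq> V \<and> cspan B = V"
    using B vec.finiteI_independent cspan_eq_span by metis
next
  fix k assume "\<exists>B. finite B \<and> card B = k \<and> B \<subseteq> V \<and> cspan B = V"
  then show "vec.dim V \<le> k"
    using vec.span_card_ge_dim cspan_eq_span by (metis order.refl)
qed

lemma cvec_add: "cvec (u + w) = cvec u + cvec w"
  by (simp add: cvec_def vec_eq_iff)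

lemma cvec_scaleR: "cvec (a *\<^sub>R u) = complex_of_real a *s cvec u"
  by (simp add: cvec_def vec_eq_iff)

lemma cvec_0 [simp]: "cvec 0 = 0"
  by (simp add: cvec_def vec_eq_iff)

lemma cvec_eq_iff: "cvec u = cvec w \<longleftrightarrow> u = w"
  by (simp add: cvec_def vec_eq_iff)

lemma cvec_eq_0_iff: "cvec u = 0 \<longleftrightarrow> u = 0"
  by (simp add: cvec_def vec_eq_iff)

lemma cvec_in_span:
  assumes "u \<in> span S"
  shows "cvec u \<in> vec.span (cvec ` S)"
proof -
  have "subspace {u. cvec u \<in> vec.span (cvec ` S)}"
    unfolding subspace_def
    by (auto simp: cvec_add cvec_scaleR vec.span_add vec.span_scale vec.span_zero)
  moreover have "S \<subseteq> {u. cvec u \<in> vec.span (cvec ` S)}"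
    by (auto intro: vec.span_base)
  ultimately show ?thesis
    using assms span_minimal by blast
qed

lemma independent_if_cvec_independent:
  assumes "vec.independent (cvec ` T)"
  shows "independent T"
proof
  assume "dependent T"
  then obtain a where "a \<in> T" "a \<in> span (T - {a})"
    unfolding dependent_def by blast
  moreover have "cvec ` (T - {a}) = cvec ` T - {cvec a}"
    by (auto simp: cvec_eq_iff)
  ultimately show False
    using assms cvec_in_span vec.dependent_def by (metis imageI)
qed

lemma cvec_in_cx: "u \<in> S \<Longrightarrow> cvec u \<in> cx S"
  unfolding cx_def cspan_eq_span by (auto intro: vec.span_base)

lemma subspace_cx: "vec.subspace (cx S)"
  unfolding cx_def cspan_eq_span by simp

lemma cx_span: "cx (span S) = vec.span (cvec ` S)"
proof
  show "cx (span S) \<subseteq> vec.span (cvec ` S)"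
    unfolding cx_def cspan_eq_span
    by (rule vec.span_minimal) (auto simp: cvec_in_span)
  show "vec.span (cvec ` S) \<subseteq> cx (span S)"
    using cvec_in_cx span_base subspace_cx vec.span_minimal by (metis image_subset_iff)
qed

definition cmat :: "real^'n^'m \<Rightarrow> complex^'n^'m" where
  "cmat A = (\<chi> i j. complex_of_real (A $ i $ j))"

lemma cmat_mult_cvec: "cmat A *v cvec u = cvec (A *v u)"
  by (simp add: vec_eq_iff cmat_def cvec_def matrix_vector_mult_def)

lemma cmat_mult: "cmat (A ** B) = cmat A ** cmat B"
  by (simp add: vec_eq_iff cmat_def matrix_matrix_mult_def)

lemma cmat_mat_1: "cmat (mat 1) = mat 1"
  by (simp add: vec_eq_iff cmat_def mat_def)

lemma matrix_vector_mult_matrix: "linear f \<Longrightarrow> matrix f *v x = f (x::real^'n)"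
  by (simp add: matrix_works linear_def scalar_mult_eq_scaleR)

lemma inj_cmat_matrix:
  fixes f :: "real^'n \<Rightarrow> real^'n"
  assumes "linear f" "inj f"
  shows "inj ((*v) (cmat (matrix f)))"
proof -
  obtain g where g: "linear g" "g \<circ> f = id"
    using linear_injective_left_inverse assms by blast
  then have "matrix g ** matrix f = mat 1"
    using matrix_compose assms(1) by (metis matrix_id_mat_1)
  then have "cmat (matrix g) ** cmat (matrix f) = mat 1"
    by (metis cmat_mult cmat_mat_1)
  then show ?thesis
    by (metis injI matrix_vector_mul_assoc matrix_vector_mul_lid)
qed

lemma cx_linear_image:
  fixes f :: "real^'n \<Rightarrow> real^'n"
  assumes "linear f"
  shows "cx (f ` S) = (*v) (cmat (matrix f)) ` cx S"
proof -
  have "cvec ` f ` S = (*v) (cmat (matrix f)) ` cvec ` S"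
    by (auto simp: image_image cmat_mult_cvec matrix_vector_mult_matrix[OF assms])
  then show ?thesis
    unfolding cx_def cspan_eq_span by (simp add: vec.span_image)
qed

lemma cdim_injective_image:
  fixes F :: "complex^'n^'n"
  assumes "vec.subspace V" "inj ((*v) F)"
  shows "cdim ((*v) F ` V) = cdim V"
  using assms cdim_eq_dim vec.subspace_image vec.dim_image_eq matrix_vector_mul_linear_gen
  by (metis inj_on_subset subset_UNIV)

section \<open>Lines, hyperplanes and determinants\<close>

lemma lgen_line:
  fixes L :: "(real^'n) set"
  assumes "subspace L" "dim L = 1"
  shows "lgen L \<in> L" "lgen L \<noteq> 0" "L = span {lgen L}"
proof -
  have "\<exists>v. v \<in> L \<and> v \<noteq> 0"
    using assms(2) dim_eq_0 by (metis subsetI singletonI zero_neq_one)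
  then show L: "lgen L \<in> L" and nz: "lgen L \<noteq> 0"
    unfolding lgen_def by (metis (mono_tags, lifting) someI_ex)+
  have "L \<subseteq> span {lgen L}"
    using card_ge_dim_independent[of "{lgen L}" L] L nz assms(2) by simp
  moreover have "span {lgen L} \<subseteq> L"
    using L assms(1) span_minimal by blast
  ultimately show "L = span {lgen L}" by blast
qed

lemma lform_hyperplane:
  fixes H :: "(real^'n) set"
  assumes "subspace H" "dim H = CARD('n) - 1"
  shows "linear (lform H)" "lform H v = 0 \<longleftrightarrow> v \<in> H" "H \<noteq> UNIV"
proof -
  have "dim H < DIM(real^'n)"
    using assms(2) by simp
  then obtain a :: "real^'n" where a: "a \<noteq> 0" "\<And>y. y \<in> span H \<Longrightarrow> orthogonal a y"
    using orthogonal_to_subspace_exists by blast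
  define K where "K = {v. a \<bullet> v = 0}"
  have K: "subspace K"
    unfolding K_def subspace_def by (auto simp: inner_add_right)
  have "a \<notin> K"
    using a(1) unfolding K_def by simp
  then have "dim K < DIM(real^'n)"
    using K dim_eq_full dim_subset_UNIV[of K] span_eq_iff by (metis UNIV_I order_le_less)
  moreover have "H \<subseteq> K"
    using a(2) span_base unfolding K_def orthogonal_def by blast
  ultimately have "H = K"
    using subspace_dim_equal[OF assms(1) K] assms(2) by simp
  then have "\<exists>f::real^'n \<Rightarrow> real. linear f \<and> {v. f v = 0} = H"
    unfolding K_def by (intro exI[of _ "\<lambda>v. a \<bullet> v"]) (auto intro: linearI simp: inner_add_right)
  then have "linear (lform H) \<and> {v. lform H v = 0} = H"
    unfolding lform_def by (rule someI_ex)
  then show "linear (lform H)" "lform H v = 0 \<longleftrightarrow> v \<in> H"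
    by auto
  show "H \<noteq> UNIV"
    using \<open>H = K\<close> \<open>a \<notin> K\<close> by blast
qed

lemma linear_forms_same_kernel_proportional:
  fixes f h :: "'a::real_vector \<Rightarrow> real"
  assumes "linear f" "linear h" "\<And>v. f v = 0 \<longleftrightarrow> h v = 0" "h b \<noteq> 0"
  shows "\<exists>c. c \<noteq> 0 \<and> (\<forall>v. f v = c * h v)"
proof (intro exI conjI allI)
  show "f b / h b \<noteq> 0"
    using assms(3,4) by simp
  fix v
  have "h (v - (h v / h b) *\<^sub>R b) = 0"
    using assms(4) by (simp add: linear_diff[OF assms(2)] linear_scale[OF assms(2)])
  then have "f (v - (h v / h b) *\<^sub>R b) = 0"
    using assms(3) by blast
  then show "f v = f b / h b * h v"
    by (simp add: linear_diff[OF assms(1)] linear_scale[OF assms(1)])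
qed

lemma det_matrix_eigenbasis:
  fixes k :: "real^'n \<Rightarrow> real^'n"
  assumes lin: "linear k" and indep: "independent B" and card: "card B = CARD('n)"
    and eigen: "\<And>b. b \<in> B \<Longrightarrow> k b = d b *\<^sub>R b"
  shows "det (matrix k) = (\<Prod>b\<in>B. d b)"
proof -
  have "finite B"
    using indep independent_explicit by blast
  then obtain \<beta> where \<beta>: "bij_betw \<beta> (UNIV::'n set) B"
    using finite_same_card_bij[of "UNIV::'n set" B] card by auto
  define M :: "real^'n^'n" where "M = transpose (\<chi> i. \<beta> i)"
  have M_mult: "M *v x = (\<Sum>i\<in>UNIV. x $ i *\<^sub>R \<beta> i)" for x
    unfolding matrix_mult_sum M_def by (simp add: column_transpose row_def scalar_mult_eq_scaleR)
  have "inj ((*v) M)"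
    unfolding vec.inj_iff_eq_0
  proof (intro allI impI)
    fix x assume "M *v x = 0"
    define c where "c b = x $ (inv_into UNIV \<beta> b)" for b
    have "(\<Sum>b\<in>B. c b *\<^sub>R b) = (\<Sum>i\<in>UNIV. c (\<beta> i) *\<^sub>R \<beta> i)"
      using sum.reindex_bij_betw[OF \<beta>, of "\<lambda>b. c b *\<^sub>R b"] by simp
    also have "\<dots> = M *v x"
      unfolding c_def M_mult using \<beta> bij_betw_inv_into_left by (intro sum.cong) fastforce+
    finally have "(\<Sum>b\<in>B. c b *\<^sub>R b) = 0"
      using \<open>M *v x = 0\<close> by simp
    then have "\<forall>b\<in>B. c b = 0"
      using indep independent_explicit by blast
    then have "x $ i = 0" for i
      using \<beta> bij_betw_inv_into_left[OF \<beta>] unfolding c_def bij_betw_def by (metis UNIV_I imageI)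
    then show "x = 0"
      by (simp add: vec_eq_iff)
  qed
  then have "det M \<noteq> 0"
    using det_nz_iff_inj_gen[of "(*v) M"] matrix_vector_mul_linear_gen by simp
  have "matrix k *v \<beta> i = d (\<beta> i) *s \<beta> i" for i
    using matrix_vector_mult_matrix[OF lin] eigen \<beta> bij_betw_apply scalar_mult_eq_scaleR by (metis UNIV_I)
  then have "matrix k ** M = transpose (\<chi> i. d (\<beta> i) *s \<beta> i)"
    unfolding M_def by (simp add: vec_eq_iff transpose_def matrix_matrix_mult_def matrix_vector_mult_def)
  then have "det (matrix k) * det M = (\<Prod>i\<in>UNIV. d (\<beta> i)) * det M"
    using det_mul[of "matrix k" M] det_rows_mul[of "\<lambda>i. d (\<beta> i)" \<beta>] unfolding M_def by (simp, metis)
  then have "det (matrix k) = (\<Prod>i\<in>UNIV. d (\<beta> i))"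
    using \<open>det M \<noteq> 0\<close> by simp
  also have "\<dots> = (\<Prod>b\<in>B. d b)"
    using prod.reindex_bij_betw[OF \<beta>] .
  finally show ?thesis .
qed

text \<open>Rescaling by a real n-th root of 1 / det g does not move subspaces; such a root exists
  when n is odd or det g > 0.\<close>

lemma det_one_on_subspaces:
  fixes g :: "real^'n \<Rightarrow> real^'n"
  assumes lin: "linear g" and det: "det (matrix g) \<noteq> 0" and root: "odd CARD('n) \<or> det (matrix g) > 0"
  obtains M :: "real^'n^'n" where "det M = 1" "\<And>S. subspace S \<Longrightarrow> (*v) M ` S = g ` S"
proof -
  define c where "c = root CARD('n) (1 / det (matrix g))"
  have c_pow: "c ^ CARD('n) = 1 / det (matrix g)"
  proof (cases "odd CARD('n)")
    case True
    then show ?thesis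
      unfolding c_def by (rule odd_real_root_pow)
  next
    case False
    then show ?thesis
      unfolding c_def using root by (intro real_root_pow_pos2) auto
  qed
  then have "c \<noteq> 0"
    using det by (metis divide_eq_0_iff one_neq_zero zero_power zero_less_card_finite)
  define M where "M = matrix ((*\<^sub>R) c \<circ> g)"
  have "det M = c ^ CARD('n) * det (matrix g)"
    unfolding M_def matrix_compose[OF lin linear_scaleR] det_mul det_matrix_scaleR ..
  then have "det M = 1"
    using c_pow det by simp
  moreover have "(*v) M ` S = g ` S" if "subspace S" for S
  proof -
    have "M *v v = g (c *\<^sub>R v)" for v
      unfolding M_def using matrix_vector_mult_matrix[OF linear_compose[OF lin linear_scaleR]]
      by (simp add: linear_scale[OF lin])
    then have "(*v) M ` S = g ` ((*\<^sub>R) c ` S)"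
      by (simp add: image_image)
    also have "(*\<^sub>R) c ` S = S"
    proof
      show "(*\<^sub>R) c ` S \<subseteq> S"
        using that subspace_scale by blast
      show "S \<subseteq> (*\<^sub>R) c ` S"
      proof
        fix v assume "v \<in> S"
        then have "(1 / c) *\<^sub>R v \<in> S"
          using that subspace_scale by blast
        then show "v \<in> (*\<^sub>R) c ` S"
          using \<open>c \<noteq> 0\<close> by (intro image_eqI[of _ _ "(1 / c) *\<^sub>R v"]) auto
      qed
    qed
    finally show ?thesis .
  qed
  ultimately show thesis
    using that by blast
qed

lemma independent_Un_if_span_Int_trivial:
  fixes S T :: "'a::euclidean_space set"
  assumes "independent S" "independent T" "span S \<inter> span T \<subseteq> {0}"
  shows "independent (S \<union> T)" "S \<inter> T = {}"
proof -
  show disjoint: "S \<inter> T = {}"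
    using assms span_base dependent_zero by blast
  show "independent (S \<union> T)"
    unfolding independent_explicit
  proof (intro conjI allI impI)
    have fin: "finite S" "finite T"
      using assms(1,2) independent_explicit by blast+
    then show "finite (S \<union> T)"
      by simp
    fix c :: "'a \<Rightarrow> real" assume "(\<Sum>v\<in>S \<union> T. c v *\<^sub>R v) = 0"
    moreover have "(\<Sum>v\<in>S \<union> T. c v *\<^sub>R v) = (\<Sum>v\<in>S. c v *\<^sub>R v) + (\<Sum>v\<in>T. c v *\<^sub>R v)"
      using sum.union_disjoint[OF fin disjoint] .
    ultimately have sums: "(\<Sum>v\<in>S. c v *\<^sub>R v) = - (\<Sum>v\<in>T. c v *\<^sub>R v)"
      by (simp add: eq_neg_iff_add_eq_0)
    have "(\<Sum>v\<in>S. c v *\<^sub>R v) \<in> span S" "- (\<Sum>v\<in>T. c v *\<^sub>R v) \<in> span T"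
      by (simp_all add: span_base span_scale span_sum span_neg)
    then have "(\<Sum>v\<in>S. c v *\<^sub>R v) = 0" "(\<Sum>v\<in>T. c v *\<^sub>R v) = 0"
      using assms(3) sums by auto
    then show "\<forall>v\<in>S \<union> T. c v = 0"
      using assms(1,2) independent_explicit by blast
  qed
qed

lemma dim_Inter_hyperplanes:
  fixes H :: "nat \<Rightarrow> (real^'n) set"
  assumes "\<And>i. i \<in> {1..k} \<Longrightarrow> subspace (H i)" "\<And>i. i \<in> {1..k} \<Longrightarrow> dim (H i) = CARD('n) - 1"
  shows "CARD('n) \<le> dim (\<Inter>i\<in>{1..k}. H i) + k"
  using assms
proof (induction k)
  case 0
  then show ?case
    by simp
next
  case (Suc k)
  define W where "W = (\<Inter>i\<in>{1..k}. H i)"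
  have "(\<Inter>i\<in>{1..Suc k}. H i) = W \<inter> H (Suc k)"
    unfolding W_def by (auto simp: atLeastAtMostSuc_conv)
  moreover have "subspace W" "subspace (H (Suc k))"
    unfolding W_def using Suc.prems(1) by (auto intro: subspace_Inter)
  then have "dim {a + b |a b. a \<in> W \<and> b \<in> H (Suc k)} + dim (W \<inter> H (Suc k)) = dim W + dim (H (Suc k))"
    by (rule dim_sums_Int)
  moreover have "dim {a + b |a b. a \<in> W \<and> b \<in> H (Suc k)} \<le> CARD('n)"
    using dim_subset_UNIV[of "{a + b |a b. a \<in> W \<and> b \<in> H (Suc k)}"] by simp
  moreover have "CARD('n) \<le> dim W + k"
    unfolding W_def using Suc by simp
  ultimately show ?case
    using Suc.prems(2)[of "Suc k"] by simp
qed

lemma diagonal_reflection: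
  fixes a :: "'n::finite"
  defines "D \<equiv> (\<chi> i j. if i = j then (if i = a then -1 else 1) else 0) :: real^'n^'n"
  shows "D ** D = mat 1" "det D = -1"
proof -
  have "(D ** D) $ i $ j = (mat 1 :: real^'n^'n) $ i $ j" for i j
  proof -
    have "(D ** D) $ i $ j = (\<Sum>k\<in>UNIV. D $ i $ k * D $ k $ j)"
      unfolding matrix_matrix_mult_def by simp
    also have "\<dots> = (\<Sum>k\<in>UNIV. if k = i then D $ i $ i * D $ i $ j else 0)"
      by (rule sum.cong) (auto simp: D_def)
    also have "\<dots> = (mat 1 :: real^'n^'n) $ i $ j"
      unfolding D_def mat_def by auto
    finally show ?thesis .
  qed
  then show "D ** D = mat 1"
    by (simp add: vec_eq_iff)
  have "det D = (\<Prod>i\<in>UNIV. D $ i $ i)"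
    by (rule det_diagonal) (simp add: D_def)
  also have "\<dots> = (\<Prod>i\<in>UNIV. if i = a then -1 else 1)"
    unfolding D_def by simp
  finally show "det D = -1"
    by (simp add: prod.delta)
qed

lemma span_singleton_scaleR:
  fixes w :: "'a::real_vector"
  assumes "c \<noteq> 0"
  shows "span {c *\<^sub>R w} = span {w}"
proof
  show "span {c *\<^sub>R w} \<subseteq> span {w}"
    by (rule span_minimal) (auto intro: span_mul span_base)
  have "w = (1 / c) *\<^sub>R (c *\<^sub>R w)"
    using assms by simp
  then have "w \<in> span {c *\<^sub>R w}"
    by (metis span_mul span_base singletonI)
  then show "span {w} \<subseteq> span {c *\<^sub>R w}"
    using span_minimal[of "{w}" "span {c *\<^sub>R w}"] by simp
qed

section \<open>Products along derangements\<close>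

lemma cycle_of_list_nth:
  assumes "distinct cs" "k < length cs"
  shows "cycle_of_list cs (cs ! k) = cs ! (Suc k mod length cs)"
proof -
  have "map (cycle_of_list cs) cs = rotate1 cs"
    using cyclic_rotation[OF assms(1), of 1] by simp
  then have "cycle_of_list cs (cs ! k) = rotate1 cs ! k"
    using assms(2) by (metis nth_map)
  then show ?thesis
    using assms(2) nth_rotate1 by simp
qed

lemma cycle_of_list_no_fixpoint:
  assumes "distinct cs" "length cs \<ge> 2" "x \<in> set cs"
  shows "cycle_of_list cs x \<noteq> x"
proof -
  obtain k where k: "k < length cs" "x = cs ! k"
    using assms(3) by (auto simp: in_set_conv_nth)
  have "Suc k mod length cs \<noteq> k"
  proof (cases "Suc k = length cs")
    case True
    then show ?thesis using assms(2) by simp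
  next
    case False
    then show ?thesis using k(1) by simp
  qed
  moreover have "Suc k mod length cs < length cs"
    by (rule mod_less_divisor) (use k(1) in linarith)
  ultimately have "cs ! (Suc k mod length cs) \<noteq> cs ! k"
    using assms(1) k(1) by (simp add: nth_eq_iff_index_eq)
  then show ?thesis
    using cycle_of_list_nth[OF assms(1) k(1)] k(2) by simp
qed

lemma cycle_of_list_derangement:
  assumes "distinct cs" "length cs \<ge> 2" "set cs = {1..r}"
  shows "cycle_of_list cs \<in> derangements r"
  unfolding derangements_def
  using cycle_permutes[of cs] cycle_of_list_no_fixpoint[OF assms(1,2)] assms(3) by simp

lemma derangement_mapping_two_points:
  assumes "a \<in> {1..r}" "b \<in> {1..r}" "c \<in> {1..r}" "d \<in> {1..r}" "distinct [a, b, c, d]"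
  obtains \<sigma> where "\<sigma> \<in> derangements r" "\<sigma> a = b" "\<sigma> c = d"
proof -
  define rs where "rs = sorted_list_of_set ({1..r} - {a, b, c, d})"
  define cs where "cs = a # b # rs @ [c, d]"
  have rs: "distinct rs" "set rs = {1..r} - {a, b, c, d}"
    unfolding rs_def by auto
  have "a \<notin> set rs" "b \<notin> set rs" "c \<notin> set rs" "d \<notin> set rs"
    using rs(2) by auto
  then have cs: "distinct cs" "length cs = length rs + 4"
    unfolding cs_def using rs(1) assms(5) by auto
  have "set cs = {a, b, c, d} \<union> set rs"
    unfolding cs_def by auto
  also have "\<dots> = {1..r}"
    using rs(2) assms(1-4) by blast
  finally have "set cs = {1..r}" .
  have entries: "cs ! 0 = a" "cs ! 1 = b" "cs ! (length rs + 2) = c" "cs ! (length rs + 3) = d"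
    unfolding cs_def by (simp_all add: nth_append)
  have index: "0 < length cs" "Suc 0 mod length cs = 1"
    "length rs + 2 < length cs" "Suc (length rs + 2) mod length cs = length rs + 3"
    using cs(2) by simp_all
  have "cycle_of_list cs (cs ! 0) = cs ! 1"
    using cycle_of_list_nth[OF cs(1) index(1)] unfolding index(2) .
  moreover have "cycle_of_list cs (cs ! (length rs + 2)) = cs ! (length rs + 3)"
    using cycle_of_list_nth[OF cs(1) index(3)] unfolding index(4) .
  ultimately have "cycle_of_list cs a = b" "cycle_of_list cs c = d"
    unfolding entries .
  moreover have "cycle_of_list cs \<in> derangements r"
    using cycle_of_list_derangement cs \<open>set cs = {1..r}\<close> by simp
  ultimately show thesis
    using that by blast
qed

lemma derangement_comp_transpose:
  assumes "\<sigma> \<in> derangements r" "\<sigma> a = b" "\<sigma> c = d" "distinct [a, b, c, d]"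
    "a \<in> {1..r}" "c \<in> {1..r}"
  shows "\<sigma> \<circ> Transposition.transpose a c \<in> derangements r"
proof -
  have \<sigma>: "\<sigma> permutes {1..r}" "\<forall>i\<in>{1..r}. \<sigma> i \<noteq> i"
    using assms(1) unfolding derangements_def by auto
  have "(\<sigma> \<circ> Transposition.transpose a c) i \<noteq> i" if "i \<in> {1..r}" for i
    using \<sigma>(2) that assms(2-4) by (cases "i = a \<or> i = c") (auto simp: Transposition.transpose_def)
  then show ?thesis
    unfolding derangements_def using permutes_compose[OF permutes_swap_id[OF assms(5,6)] \<sigma>(1)] by blast
qed

lemma derangement_in_range:
  assumes "\<sigma> \<in> derangements r" "i \<in> {1..r}"
  shows "\<sigma> i \<in> {1..r}" "\<sigma> i \<noteq> i"
proof -
  have "\<sigma> permutes {1..r}" "\<forall>i\<in>{1..r}. \<sigma> i \<noteq> i"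
    using assms(1) unfolding derangements_def by auto
  then show "\<sigma> i \<in> {1..r}" "\<sigma> i \<noteq> i"
    using permutes_in_image[of \<sigma> "{1..r}" i] assms(2) by simp_all
qed

lemma prod_remove_two:
  assumes "finite S" "a \<in> S" "c \<in> S" "a \<noteq> c"
  shows "(\<Prod>i\<in>S. f i) = f a * f c * (\<Prod>i\<in>S - {a, c}. f i)"
proof -
  have "(\<Prod>i\<in>S. f i) = f a * (\<Prod>i\<in>S - {a}. f i)"
    using prod.remove[OF assms(1,2)] .
  also have "(\<Prod>i\<in>S - {a}. f i) = f c * (\<Prod>i\<in>S - {a} - {c}. f i)"
    using prod.remove[of "S - {a}" c] assms by simp
  also have "S - {a} - {c} = S - {a, c}"
    by auto
  finally show ?thesis
    by (simp add: mult.assoc)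
qed

text \<open>Two derangements that differ by a transposition share all but two factors.\<close>

lemma derangement_prods_cross_ratio:
  fixes q :: "nat \<Rightarrow> nat \<Rightarrow> 'a::field"
  assumes nz: "\<And>i j. i \<in> {1..r} \<Longrightarrow> j \<in> {1..r} \<Longrightarrow> i \<noteq> j \<Longrightarrow> q i j \<noteq> 0"
    and const: "\<And>\<sigma>. \<sigma> \<in> derangements r \<Longrightarrow> (\<Prod>i\<in>{1..r}. q i (\<sigma> i)) = C"
    and abcd: "a \<in> {1..r}" "b \<in> {1..r}" "c \<in> {1..r}" "d \<in> {1..r}" "distinct [a, b, c, d]"
  shows "q a b * q c d = q a d * q c b"
proof -
  obtain \<sigma> where \<sigma>: "\<sigma> \<in> derangements r" "\<sigma> a = b" "\<sigma> c = d"
    using derangement_mapping_two_points[OF abcd] by blast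
  define \<tau> where "\<tau> = \<sigma> \<circ> Transposition.transpose a c"
  have \<tau>: "\<tau> \<in> derangements r" "\<tau> a = d" "\<tau> c = b"
    unfolding \<tau>_def using derangement_comp_transpose[OF \<sigma> abcd(5,1,3)] \<sigma> by auto
  define P where "P = (\<Prod>i\<in>{1..r} - {a, c}. q i (\<sigma> i))"
  have P_\<tau>: "(\<Prod>i\<in>{1..r} - {a, c}. q i (\<tau> i)) = P"
    unfolding P_def \<tau>_def by (rule prod.cong) auto
  have "q i (\<sigma> i) \<noteq> 0" if "i \<in> {1..r}" for i
    using nz[OF that] derangement_in_range[OF \<sigma>(1) that] by metis
  then have "P \<noteq> 0"
    unfolding P_def by (simp add: prod_zero_iff)
  moreover have "C = q a b * q c d * P"
    using const[OF \<sigma>(1)] prod_remove_two[of "{1..r}" a c "\<lambda>i. q i (\<sigma> i)"] \<sigma> abcd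
    unfolding P_def by simp
  moreover have "C = q a d * q c b * P"
    using const[OF \<tau>(1)] prod_remove_two[of "{1..r}" a c "\<lambda>i. q i (\<tau> i)"] \<tau> abcd P_\<tau>
    by simp
  ultimately show ?thesis
    by simp
qed

lemma derangement_prods_three:
  fixes q :: "nat \<Rightarrow> nat \<Rightarrow> 'a::comm_ring_1"
  assumes "\<And>\<sigma>. \<sigma> \<in> derangements 3 \<Longrightarrow> (\<Prod>i\<in>{1..3}. q i (\<sigma> i)) = C"
  shows "q 1 2 * q 2 3 * q 3 1 = q 1 3 * q 3 2 * q 2 1"
proof -
  have three: "{1..3::nat} = {1, 2, 3}"
    by auto
  define \<sigma> where "\<sigma> = cycle_of_list [1::nat, 2, 3]"
  define \<tau> where "\<tau> = cycle_of_list [1::nat, 3, 2]"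
  have "\<sigma> 1 = 2" "\<sigma> 2 = 3" "\<sigma> 3 = 1" "\<tau> 1 = 3" "\<tau> 3 = 2" "\<tau> 2 = 1"
    unfolding \<sigma>_def \<tau>_def by (simp_all add: Transposition.transpose_def)
  moreover have "\<sigma> \<in> derangements 3" "\<tau> \<in> derangements 3"
    unfolding \<sigma>_def \<tau>_def by (rule cycle_of_list_derangement; auto)+
  ultimately show ?thesis
    using assms[of \<sigma>] assms[of \<tau>] unfolding three by (simp add: mult_ac)
qed

lemma off_diagonal_rank_one_of_cross_ratios:
  fixes q :: "nat \<Rightarrow> nat \<Rightarrow> 'a::field"
  assumes r: "4 \<le> r"
    and nz: "\<And>i j. i \<in> {1..r} \<Longrightarrow> j \<in> {1..r} \<Longrightarrow> i \<noteq> j \<Longrightarrow> q i j \<noteq> 0"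
    and cross: "\<And>a b c d. a \<in> {1..r} \<Longrightarrow> b \<in> {1..r} \<Longrightarrow> c \<in> {1..r} \<Longrightarrow> d \<in> {1..r} \<Longrightarrow>
      distinct [a, b, c, d] \<Longrightarrow> q a b * q c d = q a d * q c b"
  obtains s t where "\<And>i. i \<in> {1..r} \<Longrightarrow> s i \<noteq> 0" "\<And>j. j \<in> {1..r} \<Longrightarrow> t j \<noteq> 0"
    "\<And>i j. i \<in> {1..r} \<Longrightarrow> j \<in> {1..r} \<Longrightarrow> i \<noteq> j \<Longrightarrow> q i j = s i * t j"
proof -
  have cross': "q a b * q c d = q a d * q c b"
    if "a \<in> {1..r}" "b \<in> {1..r}" "c \<in> {1..r}" "d \<in> {1..r}" "a \<noteq> b" "c \<noteq> d" "a \<noteq> d" "c \<noteq> b"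
    for a b c d
  proof (cases "a = c \<or> b = d")
    case True
    then show ?thesis by (auto simp: mult.commute)
  next
    case False
    then show ?thesis using cross that by simp
  qed
  txt \<open>t is the first row of q, and s i is read off in a column p i different from 1 and i.\<close>
  define p :: "nat \<Rightarrow> nat" where "p i = (if i = 2 then 3 else 2)" for i
  have p: "p i \<in> {1..r}" "p i \<noteq> 1" "p i \<noteq> i" for i
    unfolding p_def using r by auto
  define s where "s i = q i (p i) / q 1 (p i)" for i
  define t where "t j = (if j = 1 then q 2 1 / s 2 else q 1 j)" for j
  have s: "s i \<noteq> 0" if "i \<in> {1..r}" for i
  proof -
    have "1 \<in> {1..r}"
      using r by simp
    then have "q 1 (p i) \<noteq> 0"
      using nz[OF _ p(1)] p(2) by metis
    moreover have "q i (p i) \<noteq> 0"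
      using nz[OF that p(1)] p(3) by metis
    ultimately show ?thesis
      unfolding s_def by simp
  qed
  have off_column_1: "q i j = s i * q 1 j" if "i \<in> {1..r}" "j \<in> {1..r}" "i \<noteq> j" "j \<noteq> 1" for i j
  proof -
    have "q i j * q 1 (p i) = q i (p i) * q 1 j"
      by (rule cross') (use p(1-3)[of i] that r in auto)
    moreover have "q 1 (p i) \<noteq> 0"
      using nz[of 1 "p i"] p(1,2)[of i] r by auto
    ultimately show ?thesis
      unfolding s_def by (simp add: field_simps)
  qed
  have column_1: "q i 1 = s i * t 1" if "i \<in> {1..r}" "i \<noteq> 1" for i
  proof -
    define d :: nat where "d = (if i = 3 then 4 else 3)"
    have d: "d \<in> {1..r}" "d \<noteq> 1" "d \<noteq> 2" "d \<noteq> i"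
      unfolding d_def using r by auto
    have "q i 1 * q 2 d = q i d * q 2 1"
      by (rule cross') (use d that r in auto)
    moreover have "q i d = s i * q 1 d" "q 2 d = s 2 * q 1 d"
      using off_column_1[of i d] off_column_1[of 2 d] d that r by auto
    moreover have "q 1 d \<noteq> 0" "s 2 \<noteq> 0"
      using nz[of 1 d] s[of 2] d r by auto
    ultimately show ?thesis
      unfolding t_def by (simp add: field_simps)
  qed
  show thesis
  proof
    show "s i \<noteq> 0" if "i \<in> {1..r}" for i
      using s that .
    show "t j \<noteq> 0" if "j \<in> {1..r}" for j
    proof (cases "j = 1")
      case True
      then show ?thesis
        unfolding t_def using nz[of 2 1] s[of 2] r by simp
    next
      case False
      then show ?thesis
        unfolding t_def using nz[of 1 j] that r by simp
    qed
    show "q i j = s i * t j" if "i \<in> {1..r}" "j \<in> {1..r}" "i \<noteq> j" for i j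
    proof (cases "j = 1")
      case True
      then show ?thesis
        using column_1 that by simp
    next
      case False
      then show ?thesis
        using off_column_1[OF that False] unfolding t_def by simp
    qed
  qed
qed

lemma off_diagonal_rank_one_three:
  fixes q :: "nat \<Rightarrow> nat \<Rightarrow> 'a::field"
  assumes nz: "\<And>i j. i \<in> {1..3} \<Longrightarrow> j \<in> {1..3} \<Longrightarrow> i \<noteq> j \<Longrightarrow> q i j \<noteq> 0"
    and cycles: "q 1 2 * q 2 3 * q 3 1 = q 1 3 * q 3 2 * q 2 1"
  obtains s t where "\<And>i. i \<in> {1..3} \<Longrightarrow> s i \<noteq> 0" "\<And>j. j \<in> {1..3} \<Longrightarrow> t j \<noteq> 0"
    "\<And>i j. i \<in> {1..3} \<Longrightarrow> j \<in> {1..3} \<Longrightarrow> i \<noteq> j \<Longrightarrow> q i j = s i * t j"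
proof -
  have three: "{1..3::nat} = {1, 2, 3}"
    by auto
  have q: "q 1 2 \<noteq> 0" "q 1 3 \<noteq> 0" "q 2 1 \<noteq> 0" "q 2 3 \<noteq> 0" "q 3 2 \<noteq> 0"
    using nz unfolding three by auto
  define s where "s i = (if i = 1 then 1 else if i = 2 then q 2 3 / q 1 3 else q 3 2 / q 1 2)"
    for i :: nat
  define t where "t j = (if j = 1 then q 2 1 * q 1 3 / q 2 3 else q 1 j)" for j :: nat
  show thesis
  proof (rule that)
    show "s i \<noteq> 0" "t i \<noteq> 0" if "i \<in> {1..3}" for i
      using that q unfolding three s_def t_def by auto
    show "q i j = s i * t j" if "i \<in> {1..3}" "j \<in> {1..3}" "i \<noteq> j" for i j
    proof -
      have "q 3 1 = s 3 * t 1"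
        using cycles q unfolding s_def t_def by (simp add: field_simps)
      moreover have "q 3 2 = s 3 * t 2" "q 2 1 = s 2 * t 1" "q 2 3 = s 2 * t 3"
        "q 1 2 = s 1 * t 2" "q 1 3 = s 1 * t 3"
        using q unfolding s_def t_def by simp_all
      ultimately show ?thesis
        using that unfolding three by auto
    qed
  qed
qed

lemma derangement_prods_const_imp_rank_one:
  fixes q :: "nat \<Rightarrow> nat \<Rightarrow> 'a::field"
  assumes r: "3 \<le> r"
    and nz: "\<And>i j. i \<in> {1..r} \<Longrightarrow> j \<in> {1..r} \<Longrightarrow> i \<noteq> j \<Longrightarrow> q i j \<noteq> 0"
    and const: "\<And>\<sigma>. \<sigma> \<in> derangements r \<Longrightarrow> (\<Prod>i\<in>{1..r}. q i (\<sigma> i)) = C"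
  obtains s t where "\<And>i. i \<in> {1..r} \<Longrightarrow> s i \<noteq> 0" "\<And>j. j \<in> {1..r} \<Longrightarrow> t j \<noteq> 0"
    "\<And>i j. i \<in> {1..r} \<Longrightarrow> j \<in> {1..r} \<Longrightarrow> i \<noteq> j \<Longrightarrow> q i j = s i * t j"
proof (cases "r = 3")
  case True
  have "q 1 2 * q 2 3 * q 3 1 = q 1 3 * q 3 2 * q 2 1"
    using derangement_prods_three const unfolding True by blast
  then show thesis
    using off_diagonal_rank_one_three[of q] nz that unfolding True by blast
next
  case False
  then have "4 \<le> r"
    using r by simp
  moreover have "q a b * q c d = q a d * q c b"
    if "a \<in> {1..r}" "b \<in> {1..r}" "c \<in> {1..r}" "d \<in> {1..r}" "distinct [a, b, c, d]" for a b c d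
    using derangement_prods_cross_ratio[of r q C a b c d] nz const that by blast
  ultimately show thesis
    using off_diagonal_rank_one_of_cross_ratios[of r q] nz that by blast
qed

section \<open>Configurations in general position\<close>

definition flag_vec :: "'n::finite flagtuple \<Rightarrow> nat \<Rightarrow> real^'n" where
  "flag_vec x j = lgen (fst x j)"

definition flag_form :: "'n::finite flagtuple \<Rightarrow> nat \<Rightarrow> real^'n \<Rightarrow> real" where
  "flag_form x i = lform (snd x i)"

lemma flag_tupleD:
  fixes x :: "'n::finite flagtuple"
  assumes "flag_tuple r x" "j \<in> {1..r}"
  shows "subspace (fst x j)" "dim (fst x j) = 1" "subspace (snd x j)"
    "dim (snd x j) = CARD('n) - 1" "fst x j \<subseteq> snd x j"
  using assms unfolding flag_tuple_def by auto

lemma flag_vec: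
  fixes x :: "'n::finite flagtuple"
  assumes "flag_tuple r x" "j \<in> {1..r}"
  shows "flag_vec x j \<in> fst x j" "flag_vec x j \<noteq> 0" "fst x j = span {flag_vec x j}"
  using lgen_line flag_tupleD(1,2)[OF assms] unfolding flag_vec_def by blast+

lemma flag_form:
  fixes x :: "'n::finite flagtuple"
  assumes "flag_tuple r x" "i \<in> {1..r}"
  shows "linear (flag_form x i)" "flag_form x i v = 0 \<longleftrightarrow> v \<in> snd x i"
  using lform_hyperplane flag_tupleD(3,4)[OF assms] unfolding flag_form_def by blast+

lemma flag_form_flag_vec_same:
  assumes "flag_tuple r x" "i \<in> {1..r}"
  shows "flag_form x i (flag_vec x i) = 0"
  using flag_form(2)[OF assms] flag_vec(1)[OF assms] flag_tupleD(5)[OF assms] by blast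

lemma s_coord_eq: "s_coord r x \<sigma> = (\<Prod>i\<in>{1..r}. flag_form x i (flag_vec x (\<sigma> i)))"
  unfolding s_coord_def flag_form_def flag_vec_def ..

lemma cspan_cx_lines:
  assumes "flag_tuple r x" "I \<subseteq> {1..r}"
  shows "cspan (\<Union>i\<in>I. cx (fst x i)) = vec.span (cvec ` flag_vec x ` I)"
proof -
  have "cx (fst x i) = vec.span {cvec (flag_vec x i)}" if "i \<in> I" for i
    using flag_vec(3)[OF assms(1)] that assms(2) cx_span[of "{flag_vec x i}"] by auto
  then have "(\<Union>i\<in>I. cx (fst x i)) = (\<Union>i\<in>I. vec.span {cvec (flag_vec x i)})"
    by simp
  also have "vec.span \<dots> = vec.span (cvec ` flag_vec x ` I)"
  proof
    show "vec.span (\<Union>i\<in>I. vec.span {cvec (flag_vec x i)}) \<subseteq> vec.span (cvec ` flag_vec x ` I)"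
      by (intro vec.span_minimal UN_least vec.span_mono) auto
    show "vec.span (cvec ` flag_vec x ` I) \<subseteq> vec.span (\<Union>i\<in>I. vec.span {cvec (flag_vec x i)})"
      by (intro vec.span_mono) (auto intro: vec.span_base)
  qed
  finally show ?thesis
    unfolding cspan_eq_span .
qed

lemma gp_subD:
  assumes "gp_sub (x::'n::finite flagtuple) I"
  shows "cdim (cspan (\<Union>i\<in>I. cx (fst x i))) = card I"
    "cdim (\<Inter>i\<in>I. cx (snd x i)) = CARD('n) - card I"
    "\<And>i j. i \<in> I \<Longrightarrow> j \<in> I \<Longrightarrow> i \<noteq> j \<Longrightarrow> cx (fst x i) \<inter> cx (snd x j) = {0}"
    "cspan (\<Union>i\<in>I. cx (fst x i)) \<inter> (\<Inter>i\<in>I. cx (snd x i)) = {0}"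
  using assms unfolding gp_sub_def by (elim conjE; blast)+

lemma gp_sub_independent:
  fixes x :: "'n::finite flagtuple"
  assumes ft: "flag_tuple r x" and I: "I \<subseteq> {1..r}" and gp: "gp_sub x I"
  shows "independent (flag_vec x ` I)" "inj_on (flag_vec x) I"
proof -
  define T where "T = flag_vec x ` I"
  have fin: "finite I" "finite T"
    unfolding T_def using I finite_subset by auto
  have "cdim (vec.span (cvec ` T)) = card I"
    using gp_subD(1)[OF gp] cspan_cx_lines[OF ft I] unfolding T_def by simp
  then have dim: "vec.dim (cvec ` T) = card I"
    using cdim_eq_dim[of "vec.span (cvec ` T)"] by simp
  have "card (cvec ` T) \<le> card T" "card T \<le> card I"
    unfolding T_def using fin card_image_le by blast+
  moreover have "vec.dim (cvec ` T) \<le> card (cvec ` T)"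
    using vec.dim_le_card' fin(2) by blast
  ultimately have card: "card (cvec ` T) = card I" "card T = card I"
    using dim by linarith+
  then show "inj_on (flag_vec x) I"
    unfolding T_def using eq_card_imp_inj_on fin(1) by blast
  have "vec.independent (cvec ` T)"
    by (rule vec.card_le_dim_spanning[of _ "cvec ` T"]) (use fin card dim in \<open>auto intro: vec.span_base\<close>)
  then show "independent (flag_vec x ` I)"
    unfolding T_def by (rule independent_if_cvec_independent)
qed

lemma gp_sub_flag_form_nonzero:
  fixes x :: "'n::finite flagtuple"
  assumes ft: "flag_tuple r x" and I: "I \<subseteq> {1..r}" and gp: "gp_sub x I"
    and ij: "i \<in> I" "j \<in> I" "i \<noteq> j"
  shows "flag_form x i (flag_vec x j) \<noteq> 0"
proof
  have ij_r: "i \<in> {1..r}" "j \<in> {1..r}"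
    using ij I by auto
  assume "flag_form x i (flag_vec x j) = 0"
  then have "cvec (flag_vec x j) \<in> cx (snd x i)"
    using flag_form(2)[OF ft ij_r(1)] by (simp add: cvec_in_cx)
  moreover have "cvec (flag_vec x j) \<in> cx (fst x j)"
    using flag_vec(1)[OF ft ij_r(2)] by (rule cvec_in_cx)
  moreover have "cx (fst x j) \<inter> cx (snd x i) = {0}"
    using gp_subD(3)[OF gp ij(2,1)] ij(3) by simp
  ultimately have "cvec (flag_vec x j) = 0"
    by blast
  then show False
    using flag_vec(2)[OF ft ij_r(2)] by (simp add: cvec_eq_0_iff)
qed

lemma gp_sub_Inter_hyperplanes:
  fixes x :: "'n::finite flagtuple"
  assumes gp: "gp_sub x I" and card: "card I = CARD('n)"
  shows "(\<Inter>i\<in>I. snd x i) \<subseteq> {0}"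
proof
  fix u assume "u \<in> (\<Inter>i\<in>I. snd x i)"
  then have "cvec u \<in> (\<Inter>i\<in>I. cx (snd x i))"
    using cvec_in_cx by blast
  moreover have "vec.subspace (\<Inter>i\<in>I. cx (snd x i))"
    by (rule vec.subspace_Inter) (auto simp: subspace_cx)
  then have "cdim (\<Inter>i\<in>I. cx (snd x i)) = vec.dim (\<Inter>i\<in>I. cx (snd x i))"
    by (rule cdim_eq_dim)
  then have "vec.dim (\<Inter>i\<in>I. cx (snd x i)) = 0"
    using gp_subD(2)[OF gp] card by linarith
  then have "(\<Inter>i\<in>I. cx (snd x i)) \<subseteq> {0}"
    using vec.dim_eq_0 by blast
  ultimately have "cvec u = 0"
    by blast
  then show "u \<in> {0}"
    by (simp add: cvec_eq_0_iff)
qed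

lemma gp_sub_span_Int_hyperplanes:
  fixes x :: "'n::finite flagtuple"
  assumes ft: "flag_tuple r x" and I: "I \<subseteq> {1..r}" and gp: "gp_sub x I"
  shows "span (flag_vec x ` I) \<inter> (\<Inter>i\<in>I. snd x i) \<subseteq> {0}"
proof
  fix u assume u: "u \<in> span (flag_vec x ` I) \<inter> (\<Inter>i\<in>I. snd x i)"
  then have "cvec u \<in> cspan (\<Union>i\<in>I. cx (fst x i))"
    unfolding cspan_cx_lines[OF ft I] using cvec_in_span by blast
  moreover have "cvec u \<in> (\<Inter>i\<in>I. cx (snd x i))"
    using u cvec_in_cx by blast
  ultimately have "cvec u = 0"
    using gp_subD(4)[OF gp] by blast
  then show "u \<in> {0}"
    by (simp add: cvec_eq_0_iff)
qed

lemma U_flag_tuple: "x \<in> U r \<Longrightarrow> flag_tuple r x"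
  unfolding U_def by blast

lemma U_gp_sub_all: "x \<in> U r \<Longrightarrow> r \<le> CARD('n) \<Longrightarrow> gp_sub (x::'n::finite flagtuple) {1..r}"
  unfolding U_def gen_pos_def by auto

lemma U_gp_sub_subset:
  "x \<in> U r \<Longrightarrow> CARD('n) < r \<Longrightarrow> S \<subseteq> {1..r} \<Longrightarrow> card S = CARD('n) \<Longrightarrow> gp_sub (x::'n::finite flagtuple) S"
  unfolding U_def gen_pos_def by auto

lemma U_flag_form_nonzero:
  fixes x :: "'n::finite flagtuple"
  assumes x: "x \<in> U r" and n: "2 \<le> CARD('n)" and ij: "i \<in> {1..r}" "j \<in> {1..r}" "i \<noteq> j"
  shows "flag_form x i (flag_vec x j) \<noteq> 0"
proof (cases "r \<le> CARD('n)")
  case True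
  then show ?thesis
    using gp_sub_flag_form_nonzero[OF U_flag_tuple[OF x] _ U_gp_sub_all[OF x True] ij] by simp
next
  case False
  have "CARD('n) - 2 \<le> card ({1..r} - {i, j})"
    using False ij by auto
  then obtain T where T: "T \<subseteq> {1..r} - {i, j}" "card T = CARD('n) - 2" "finite T"
    by (rule obtain_subset_with_card_n)
  define S where "S = insert i (insert j T)"
  have S: "S \<subseteq> {1..r}"
    using T ij unfolding S_def by auto
  have "i \<notin> T" "j \<notin> T"
    using T(1) by auto
  then have "card S = CARD('n)"
    unfolding S_def using T(2,3) ij(3) n by (simp add: card_insert_if)
  then have "gp_sub x S"
    using U_gp_sub_subset[OF x _ S] False by simp
  then show ?thesis
    using gp_sub_flag_form_nonzero[OF U_flag_tuple[OF x] S] ij unfolding S_def by auto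
qed

lemma U_independent:
  fixes x :: "'n::finite flagtuple"
  assumes x: "x \<in> U r"
  shows "independent (flag_vec x ` {1..min CARD('n) r})" "inj_on (flag_vec x) {1..min CARD('n) r}"
proof -
  have "gp_sub x {1..min CARD('n) r}"
  proof (cases "r \<le> CARD('n)")
    case True
    then show ?thesis
      using U_gp_sub_all[OF x] by (simp add: min_absorb2)
  next
    case False
    then show ?thesis
      using U_gp_sub_subset[OF x, of "{1..CARD('n)}"] by (simp add: min_absorb1)
  qed
  then show "independent (flag_vec x ` {1..min CARD('n) r})" "inj_on (flag_vec x) {1..min CARD('n) r}"
    using gp_sub_independent[OF U_flag_tuple[OF x]] by auto
qed

lemma U_Inter_hyperplanes:
  fixes x :: "'n::finite flagtuple"
  assumes x: "x \<in> U r" and n: "CARD('n) \<le> r"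
  shows "(\<Inter>i\<in>{1..r}. snd x i) \<subseteq> {0}"
proof (cases "CARD('n) = r")
  case True
  then show ?thesis
    using gp_sub_Inter_hyperplanes[OF U_gp_sub_all[OF x]] by simp
next
  case False
  then have "gp_sub x {1..CARD('n)}"
    using U_gp_sub_subset[OF x, of "{1..CARD('n)}"] n by simp
  then have "(\<Inter>i\<in>{1..CARD('n)}. snd x i) \<subseteq> {0}"
    by (rule gp_sub_Inter_hyperplanes) simp
  moreover have "(\<Inter>i\<in>{1..r}. snd x i) \<subseteq> (\<Inter>i\<in>{1..CARD('n)}. snd x i)"
    using n by (intro INF_superset_mono) auto
  ultimately show ?thesis
    by blast
qed

lemma U_span_Int_hyperplanes:
  fixes x :: "'n::finite flagtuple"
  assumes x: "x \<in> U r" and n: "r < CARD('n)"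
  shows "span (flag_vec x ` {1..r}) \<inter> (\<Inter>i\<in>{1..r}. snd x i) \<subseteq> {0}"
  using gp_sub_span_Int_hyperplanes[OF U_flag_tuple[OF x] _ U_gp_sub_all[OF x]] n by simp

definition flag_image :: "(real^'n \<Rightarrow> real^'n) \<Rightarrow> 'n::finite flagtuple \<Rightarrow> 'n flagtuple" where
  "flag_image f x = ((\<lambda>i. f ` fst x i), (\<lambda>i. f ` snd x i))"

lemma flag_image_simps [simp]: "fst (flag_image f x) i = f ` fst x i" "snd (flag_image f x) i = f ` snd x i"
  unfolding flag_image_def by auto

lemma flag_tuple_flag_image:
  fixes x :: "'n::finite flagtuple"
  assumes f: "linear f" "inj f" and x: "flag_tuple r x"
  shows "flag_tuple r (flag_image f x)"
  unfolding flag_tuple_def flag_image_simps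
proof
  fix i assume i: "i \<in> {1..r}"
  have "inj_on f (span S)" for S
    using f(2) by (simp add: inj_on_def inj_def)
  then show "subspace (f ` fst x i) \<and> dim (f ` fst x i) = 1 \<and> subspace (f ` snd x i) \<and>
      dim (f ` snd x i) = CARD('n) - 1 \<and> f ` fst x i \<subseteq> f ` snd x i"
    using flag_tupleD[OF x i] linear_subspace_image[OF f(1)] dim_image_eq[OF f(1)] by auto
qed

text \<open>Complexification turns images under f into images under the complexified matrix of f.\<close>

lemma gp_sub_flag_image:
  fixes x :: "'n::finite flagtuple"
  assumes f: "linear f" "inj f" and gp: "gp_sub x I" and I: "I \<noteq> {}"
  shows "gp_sub (flag_image f x) I"
proof -
  define F where "F = cmat (matrix f)"
  have F: "inj ((*v) F)"
    unfolding F_def using inj_cmat_matrix[OF f] .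
  have cx_f: "cx (f ` S) = (*v) F ` cx S" for S
    unfolding F_def using cx_linear_image[OF f(1)] .
  have lines: "cspan (\<Union>i\<in>I. cx (f ` fst x i)) = (*v) F ` cspan (\<Union>i\<in>I. cx (fst x i))"
    unfolding cx_f cspan_eq_span image_UN[symmetric] by (simp add: vec.span_image)
  have hyperplanes: "(\<Inter>i\<in>I. cx (f ` snd x i)) = (*v) F ` (\<Inter>i\<in>I. cx (snd x i))"
    unfolding cx_f using image_INT[of "(*v) F" UNIV I "\<lambda>i. cx (snd x i)"] F I by auto
  have "vec.subspace (cspan (\<Union>i\<in>I. cx (fst x i)))" "vec.subspace (\<Inter>i\<in>I. cx (snd x i))"
    unfolding cspan_eq_span by (auto intro: vec.subspace_Inter simp: subspace_cx)
  then have "cdim (cspan (\<Union>i\<in>I. cx (fst (flag_image f x) i))) = card I"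
    "cdim (\<Inter>i\<in>I. cx (snd (flag_image f x) i)) = CARD('n) - card I"
    using lines hyperplanes cdim_injective_image[OF _ F] gp_subD(1,2)[OF gp] by simp_all
  moreover have "\<forall>i\<in>I. \<forall>j\<in>I. i \<noteq> j \<longrightarrow> cx (fst (flag_image f x) i) \<inter> cx (snd (flag_image f x) j) = {0}"
    unfolding flag_image_simps cx_f image_Int[OF F, symmetric] using gp_subD(3)[OF gp] by simp
  moreover have "cspan (\<Union>i\<in>I. cx (fst (flag_image f x) i)) \<inter> (\<Inter>i\<in>I. cx (snd (flag_image f x) i)) = {0}"
    unfolding flag_image_simps lines hyperplanes image_Int[OF F, symmetric] gp_subD(4)[OF gp] by simp
  ultimately show ?thesis
    unfolding gp_sub_def by blast
qed

lemma U_flag_image: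
  fixes x :: "'n::finite flagtuple"
  assumes f: "linear f" "inj f" and x: "x \<in> U r" and r: "1 \<le> r"
  shows "flag_image f x \<in> U r"
proof -
  have "gen_pos r (flag_image f x)"
  proof (cases "r \<le> CARD('n)")
    case True
    then show ?thesis
      unfolding gen_pos_def using gp_sub_flag_image[OF f U_gp_sub_all[OF x True]] r by simp
  next
    case False
    have "gp_sub (flag_image f x) S" if "S \<subseteq> {1..r}" "card S = CARD('n)" for S
      using gp_sub_flag_image[OF f U_gp_sub_subset[OF x _ that]] False that by fastforce
    then show ?thesis
      unfolding gen_pos_def using False by simp
  qed
  then show ?thesis
    using flag_tuple_flag_image[OF f U_flag_tuple[OF x]] unfolding U_def by blast
qed

section \<open>Rescaled configurations\<close>

definition flag_pairing :: "'n::finite flagtuple \<Rightarrow> nat \<Rightarrow> nat \<Rightarrow> real" where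
  "flag_pairing x i j = flag_form x i (flag_vec x j)"

definition rescaled :: "nat \<Rightarrow> 'n::finite flagtuple \<Rightarrow> 'n flagtuple \<Rightarrow> bool" where
  "rescaled r x z \<longleftrightarrow> (\<exists>s t. (\<forall>i\<in>{1..r}. s i \<noteq> 0 \<and> t i \<noteq> 0) \<and>
     (\<forall>i\<in>{1..r}. \<forall>j\<in>{1..r}. flag_pairing z i j = s i * flag_pairing x i j * t j))"

lemma theta_eq_if_rescaled:
  assumes "rescaled r x z"
  shows "theta_eq r x z"
proof -
  obtain s t where st: "\<forall>i\<in>{1..r}. s i \<noteq> 0 \<and> t i \<noteq> 0"
    "\<forall>i\<in>{1..r}. \<forall>j\<in>{1..r}. flag_pairing z i j = s i * flag_pairing x i j * t j"
    using assms unfolding rescaled_def by blast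
  define c where "c = (\<Prod>i\<in>{1..r}. s i) * (\<Prod>j\<in>{1..r}. t j)"
  have "s_coord r z \<sigma> = c * s_coord r x \<sigma>" if \<sigma>: "\<sigma> \<in> derangements r" for \<sigma>
  proof -
    have "s_coord r z \<sigma> = (\<Prod>i\<in>{1..r}. s i * flag_pairing x i (\<sigma> i) * t (\<sigma> i))"
      unfolding s_coord_eq flag_pairing_def[symmetric]
      using st(2) derangement_in_range(1)[OF \<sigma>] by (intro prod.cong) auto
    also have "\<dots> = (\<Prod>i\<in>{1..r}. s i) * s_coord r x \<sigma> * (\<Prod>i\<in>{1..r}. t (\<sigma> i))"
      unfolding s_coord_eq flag_pairing_def prod.distrib ..
    also have "(\<Prod>i\<in>{1..r}. t (\<sigma> i)) = (\<Prod>j\<in>{1..r}. t j)"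
      using prod.permute[of \<sigma> "{1..r}" t] \<sigma> unfolding derangements_def by (simp add: comp_def)
    finally show ?thesis
      unfolding c_def by simp
  qed
  moreover have "c \<noteq> 0"
    unfolding c_def using st(1) by simp
  ultimately show ?thesis
    unfolding theta_eq_def by blast
qed

text \<open>Dividing the pairings of z by those of x gives a matrix whose products along all
  derangements agree, so it has rank one off the diagonal; on the diagonal both pairings vanish.\<close>

lemma rescaled_if_theta_eq:
  fixes x :: "'n::finite flagtuple"
  assumes x: "x \<in> U r" and z: "z \<in> U r" and r: "3 \<le> r" and n: "2 \<le> CARD('n)"
    and theta: "theta_eq r x z"
  shows "rescaled r x z"
proof -
  obtain c where c: "\<And>\<sigma>. \<sigma> \<in> derangements r \<Longrightarrow> s_coord r z \<sigma> = c * s_coord r x \<sigma>"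
    using theta unfolding theta_eq_def by blast
  define q where "q i j = flag_pairing z i j / flag_pairing x i j" for i j
  have x_nz: "flag_pairing x i j \<noteq> 0" if "i \<in> {1..r}" "j \<in> {1..r}" "i \<noteq> j" for i j
    unfolding flag_pairing_def using U_flag_form_nonzero[OF x n that] .
  have q_nz: "q i j \<noteq> 0" if "i \<in> {1..r}" "j \<in> {1..r}" "i \<noteq> j" for i j
    unfolding q_def flag_pairing_def using U_flag_form_nonzero[OF x n that] U_flag_form_nonzero[OF z n that]
    by simp
  have const: "(\<Prod>i\<in>{1..r}. q i (\<sigma> i)) = c" if \<sigma>: "\<sigma> \<in> derangements r" for \<sigma>
  proof -
    have "flag_pairing x i (\<sigma> i) \<noteq> 0" if "i \<in> {1..r}" for i
      using x_nz[OF that derangement_in_range(1)[OF \<sigma> that]] derangement_in_range(2)[OF \<sigma> that]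
      by metis
    then have "(\<Prod>i\<in>{1..r}. flag_pairing x i (\<sigma> i)) \<noteq> 0"
      by simp
    moreover have "(\<Prod>i\<in>{1..r}. flag_pairing z i (\<sigma> i)) = c * (\<Prod>i\<in>{1..r}. flag_pairing x i (\<sigma> i))"
      using c[OF \<sigma>] unfolding s_coord_eq flag_pairing_def .
    ultimately show ?thesis
      unfolding q_def by (simp add: prod_dividef)
  qed
  then obtain s t where s: "\<And>i. i \<in> {1..r} \<Longrightarrow> s i \<noteq> 0" and t: "\<And>j. j \<in> {1..r} \<Longrightarrow> t j \<noteq> 0"
    and st: "\<And>i j. i \<in> {1..r} \<Longrightarrow> j \<in> {1..r} \<Longrightarrow> i \<noteq> j \<Longrightarrow> q i j = s i * t j"
    using derangement_prods_const_imp_rank_one[of r q c, OF r q_nz const] by blast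
  have "flag_pairing z i j = s i * flag_pairing x i j * t j" if "i \<in> {1..r}" "j \<in> {1..r}" for i j
  proof (cases "i = j")
    case True
    then show ?thesis
      unfolding flag_pairing_def
      using flag_form_flag_vec_same[OF U_flag_tuple[OF x] that(1)] flag_form_flag_vec_same[OF U_flag_tuple[OF z] that(1)]
      by simp
  next
    case False
    then show ?thesis
      using st[OF that False] x_nz[OF that False] unfolding q_def by (simp add: field_simps)
  qed
  then show ?thesis
    unfolding rescaled_def using s t by blast
qed

lemma rescaled_flag_image:
  fixes x :: "'n::finite flagtuple"
  assumes f: "linear f" "inj f" and x: "flag_tuple r x"
  shows "rescaled r x (flag_image f x)"
proof -
  define y where "y = flag_image f x"
  have y: "flag_tuple r y"
    unfolding y_def using flag_tuple_flag_image[OF f x] .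
  have "\<exists>l. l \<noteq> 0 \<and> flag_vec y j = l *\<^sub>R f (flag_vec x j)" if j: "j \<in> {1..r}" for j
  proof -
    have "flag_vec y j \<in> f ` span {flag_vec x j}"
      using flag_vec(1)[OF y j] flag_vec(3)[OF x j] unfolding y_def by simp
    then obtain l where "flag_vec y j = f (l *\<^sub>R flag_vec x j)"
      by (auto simp: span_singleton)
    then have l: "flag_vec y j = l *\<^sub>R f (flag_vec x j)"
      using linear_scale[OF f(1)] by simp
    then show ?thesis
      using flag_vec(2)[OF y j] by (intro exI[of _ l]) auto
  qed
  then obtain t where t: "\<And>j. j \<in> {1..r} \<Longrightarrow> t j \<noteq> 0 \<and> flag_vec y j = t j *\<^sub>R f (flag_vec x j)"
    by metis
  have "\<exists>m. m \<noteq> 0 \<and> (\<forall>u. flag_form y i (f u) = m * flag_form x i u)" if i: "i \<in> {1..r}" for i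
  proof -
    obtain b where "b \<notin> snd x i"
      using lform_hyperplane(3) flag_tupleD(3,4)[OF x i] by blast
    then have "flag_form x i b \<noteq> 0"
      using flag_form(2)[OF x i] by simp
    moreover have "linear (\<lambda>u. flag_form y i (f u))"
      using linear_compose[OF f(1) flag_form(1)[OF y i]] by (simp add: o_def)
    moreover have "flag_form y i (f u) = 0 \<longleftrightarrow> flag_form x i u = 0" for u
      using flag_form(2)[OF y i] flag_form(2)[OF x i] f(2) unfolding y_def by (auto simp: inj_image_mem_iff)
    ultimately show ?thesis
      using linear_forms_same_kernel_proportional flag_form(1)[OF x i] by blast
  qed
  then obtain s where s: "\<And>i. i \<in> {1..r} \<Longrightarrow> s i \<noteq> 0 \<and> (\<forall>u. flag_form y i (f u) = s i * flag_form x i u)"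
    by metis
  have "flag_pairing y i j = s i * flag_pairing x i j * t j" if "i \<in> {1..r}" "j \<in> {1..r}" for i j
  proof -
    have "flag_pairing y i j = flag_form y i (f (t j *\<^sub>R flag_vec x j))"
      unfolding flag_pairing_def using t[OF that(2)] linear_scale[OF f(1)] by simp
    also have "\<dots> = s i * flag_form x i (t j *\<^sub>R flag_vec x j)"
      using s[OF that(1)] by blast
    finally show ?thesis
      unfolding flag_pairing_def using linear_scale[OF flag_form(1)[OF x that(1)]] by simp
  qed
  then show ?thesis
    unfolding rescaled_def y_def[symmetric] using s t by blast
qed

section \<open>Linear maps between configurations\<close>

definition maps_flags :: "nat \<Rightarrow> (real^'n \<Rightarrow> real^'n) \<Rightarrow> 'n::finite flagtuple \<Rightarrow> 'n flagtuple \<Rightarrow> bool" where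
  "maps_flags r g x z \<longleftrightarrow> (\<forall>i\<in>{1..r}. fst z i = g ` fst x i \<and> snd z i = g ` snd x i)"

lemma maps_flags_if_rescaling:
  fixes x z :: "'n::finite flagtuple"
  assumes x: "flag_tuple r x" and z: "flag_tuple r z" and g: "linear g" "inj g"
    and vec: "\<And>j. j \<in> {1..r} \<Longrightarrow> g (flag_vec x j) = c j *\<^sub>R flag_vec z j \<and> c j \<noteq> 0"
    and form: "\<And>i u. i \<in> {1..r} \<Longrightarrow> flag_form z i (g u) = s i * flag_form x i u \<and> s i \<noteq> 0"
  shows "maps_flags r g x z"
  unfolding maps_flags_def
proof (intro ballI conjI)
  fix i assume i: "i \<in> {1..r}"
  have "g ` fst x i = span (g ` {flag_vec x i})"
    unfolding flag_vec(3)[OF x i] by (rule span_linear_image[OF g(1), symmetric])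
  also have "\<dots> = span {flag_vec z i}"
    using vec[OF i] span_singleton_scaleR[of "c i"] by simp
  finally show "fst z i = g ` fst x i"
    using flag_vec(3)[OF z i] by simp
  show "snd z i = g ` snd x i"
  proof (rule sym, rule equalityI)
    show "g ` snd x i \<subseteq> snd z i"
    proof
      fix v assume "v \<in> g ` snd x i"
      then obtain u where "u \<in> snd x i" "v = g u"
        by blast
      then have "flag_form z i v = 0"
        using form[OF i, of u] flag_form(2)[OF x i, of u] by simp
      then show "v \<in> snd z i"
        using flag_form(2)[OF z i] by blast
    qed
    show "snd z i \<subseteq> g ` snd x i"
    proof
      fix v assume v: "v \<in> snd z i"
      have "surj g"
        using linear_injective_imp_surjective[OF g] by simp
      then obtain u where u: "v = g u"
        by blast
      then have "flag_form z i (g u) = 0"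
        using v flag_form(2)[OF z i] by blast
      then have "flag_form x i u = 0"
        using form[OF i, of u] by simp
      then show "v \<in> g ` snd x i"
        using u flag_form(2)[OF x i] by blast
    qed
  qed
qed

lemma U_complement_basis:
  fixes x :: "'n::finite flagtuple"
  assumes x: "x \<in> U r" and n: "r < CARD('n)"
  defines "W \<equiv> (\<Inter>i\<in>{1..r}. snd x i)"
  obtains B where "subspace W" "B \<subseteq> W" "independent B" "W \<subseteq> span B" "card B = dim W"
    "dim W = CARD('n) - r"
    "independent (flag_vec x ` {1..r} \<union> B)" "flag_vec x ` {1..r} \<inter> B = {}"
    "span (flag_vec x ` {1..r} \<union> B) = UNIV"
proof -
  define V where "V = flag_vec x ` {1..r}"
  have V: "independent V" "inj_on (flag_vec x) {1..r}"
    using U_independent[OF x] n unfolding V_def by (simp_all add: min_absorb2)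
  have x_ft: "flag_tuple r x"
    using U_flag_tuple[OF x] .
  have W: "subspace W"
    unfolding W_def using flag_tupleD(3)[OF x_ft] by (auto intro: subspace_Inter)
  have VW: "span V \<inter> W \<subseteq> {0}"
    unfolding V_def W_def using U_span_Int_hyperplanes[OF x n] .
  have dim_V: "dim (span V) = r"
    using dim_span_eq_card_independent[OF V(1)] card_image[OF V(2)] unfolding V_def by simp
  have "dim {a + b |a b. a \<in> span V \<and> b \<in> W} + dim (span V \<inter> W) = dim (span V) + dim W"
    using dim_sums_Int[OF subspace_span W] .
  moreover have "dim (span V \<inter> W) = 0"
    using VW dim_eq_0 by blast
  moreover have "dim {a + b |a b. a \<in> span V \<and> b \<in> W} \<le> CARD('n)"
    using dim_subset_UNIV[of "{a + b |a b. a \<in> span V \<and> b \<in> W}"] by simp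
  moreover have "CARD('n) \<le> dim W + r"
    unfolding W_def using dim_Inter_hyperplanes flag_tupleD(3,4)[OF x_ft] by blast
  ultimately have dim_W: "dim W = CARD('n) - r"
    using dim_V by linarith
  obtain B where B: "B \<subseteq> W" "independent B" "W \<subseteq> span B" "card B = dim W"
    using basis_exists by blast
  have "span B \<subseteq> W"
    using B(1) W span_minimal by blast
  then have VB: "independent (V \<union> B)" "V \<inter> B = {}"
    using independent_Un_if_span_Int_trivial[OF V(1) B(2)] VW by blast+
  moreover have "finite B"
    using B(2) independent_explicit by blast
  then have "card (V \<union> B) = CARD('n)"
    using card_Un_disjoint[OF _ _ VB(2)] V(2) dim_W n unfolding V_def B(4) by (simp add: card_image)
  then have "span (V \<union> B) = UNIV"
    using card_ge_dim_independent[OF _ VB(1), of UNIV] by auto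
  ultimately show thesis
    using that W B dim_W unfolding V_def by blast
qed

lemma rescaledD:
  assumes "rescaled r x z"
  obtains s t where "\<And>i. i \<in> {1..r} \<Longrightarrow> s i \<noteq> 0" "\<And>j. j \<in> {1..r} \<Longrightarrow> t j \<noteq> 0"
    "\<And>i j. i \<in> {1..r} \<Longrightarrow> j \<in> {1..r} \<Longrightarrow>
       flag_form z i (flag_vec z j) = s i * flag_form x i (flag_vec x j) * t j"
  using assms unfolding rescaled_def flag_pairing_def by blast

lemma rescaled_iso_small:
  fixes x z :: "'n::finite flagtuple"
  assumes x: "x \<in> U r" and z: "z \<in> U r" and n: "CARD('n) \<le> r" and resc: "rescaled r x z"
  obtains g where "linear g" "inj g" "maps_flags r g x z"
proof -
  obtain s t where s: "\<And>i. i \<in> {1..r} \<Longrightarrow> s i \<noteq> 0" and t: "\<And>j. j \<in> {1..r} \<Longrightarrow> t j \<noteq> 0"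
    and st: "\<And>i j. i \<in> {1..r} \<Longrightarrow> j \<in> {1..r} \<Longrightarrow>
       flag_form z i (flag_vec z j) = s i * flag_form x i (flag_vec x j) * t j"
    using rescaledD[OF resc] by blast
  have x_ft: "flag_tuple r x" and z_ft: "flag_tuple r z"
    using U_flag_tuple x z by blast+
  define J where "J = {1..CARD('n)}"
  have J: "J \<subseteq> {1..r}" "independent (flag_vec x ` J)" "inj_on (flag_vec x) J"
    using U_independent[OF x] n unfolding J_def by (auto simp: min_absorb1)
  define F where "F b = (1 / t (inv_into J (flag_vec x) b)) *\<^sub>R flag_vec z (inv_into J (flag_vec x) b)"
    for b
  obtain g where g: "linear g" "\<forall>b\<in>flag_vec x ` J. g b = F b"
    using linear_independent_extend[OF J(2)] by blast
  have g_vec_J: "g (flag_vec x j) = (1 / t j) *\<^sub>R flag_vec z j" if "j \<in> J" for j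
    using g(2) that inv_into_f_f[OF J(3) that] unfolding F_def by simp
  have "card (flag_vec x ` J) = CARD('n)"
    using card_image[OF J(3)] unfolding J_def by simp
  then have spans: "u \<in> span (flag_vec x ` J)" for u
    using card_ge_dim_independent[OF _ J(2), of UNIV] by auto
  have form: "flag_form z i (g u) = s i * flag_form x i u" if i: "i \<in> {1..r}" for i u
  proof (rule linear_eq_on_span[OF _ _ _ spans])
    show "linear (\<lambda>u. flag_form z i (g u))"
      using linear_compose[OF g(1) flag_form(1)[OF z_ft i]] by (simp add: o_def)
    show "linear (\<lambda>u. s i * flag_form x i u)"
      using linear_compose[OF flag_form(1)[OF x_ft i] linear_scaleR, of "s i"] by (simp add: o_def)
    fix b assume "b \<in> flag_vec x ` J"
    then obtain j where j: "j \<in> J" "b = flag_vec x j"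
      by blast
    then have "j \<in> {1..r}"
      using J(1) by blast
    have "flag_form z i (g b) = (1 / t j) * flag_form z i (flag_vec z j)"
      using g_vec_J[OF j(1)] j(2) linear_scale[OF flag_form(1)[OF z_ft i]] by simp
    also have "\<dots> = s i * flag_form x i b"
      using st[OF i \<open>j \<in> {1..r}\<close>] t[OF \<open>j \<in> {1..r}\<close>] j(2) by simp
    finally show "flag_form z i (g b) = s i * flag_form x i b" .
  qed
  txt \<open>The hyperplanes of z meet only in 0, which determines g on the remaining lines.\<close>
  have vec: "g (flag_vec x j) = (1 / t j) *\<^sub>R flag_vec z j" if j: "j \<in> {1..r}" for j
  proof -
    have "g (flag_vec x j) - (1 / t j) *\<^sub>R flag_vec z j \<in> snd z i" if i: "i \<in> {1..r}" for i
    proof -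
      have "flag_form z i (g (flag_vec x j) - (1 / t j) *\<^sub>R flag_vec z j)
          = s i * flag_form x i (flag_vec x j) - (1 / t j) * flag_form z i (flag_vec z j)"
        using form[OF i] linear_diff[OF flag_form(1)[OF z_ft i]] linear_scale[OF flag_form(1)[OF z_ft i]]
        by simp
      also have "\<dots> = 0"
        using st[OF i j] t[OF j] by simp
      finally show ?thesis
        using flag_form(2)[OF z_ft i] by blast
    qed
    then have "g (flag_vec x j) - (1 / t j) *\<^sub>R flag_vec z j \<in> (\<Inter>i\<in>{1..r}. snd z i)"
      by blast
    then show ?thesis
      using U_Inter_hyperplanes[OF z n] by auto
  qed
  have "inj g"
    unfolding linear_injective_0[OF g(1)]
  proof (intro allI impI)
    fix u assume "g u = 0"
    have "u \<in> snd x i" if "i \<in> {1..r}" for i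
    proof -
      have "s i * flag_form x i u = 0"
        using form[OF that, of u] \<open>g u = 0\<close> linear_0[OF flag_form(1)[OF z_ft that]] by simp
      then show ?thesis
        using s[OF that] flag_form(2)[OF x_ft that] by simp
    qed
    then have "u \<in> (\<Inter>i\<in>{1..r}. snd x i)"
      by blast
    then show "u = 0"
      using U_Inter_hyperplanes[OF x n] by auto
  qed
  moreover have "maps_flags r g x z"
    by (rule maps_flags_if_rescaling[OF x_ft z_ft g(1) \<open>inj g\<close>]) (use vec form s t in auto)
  ultimately show thesis
    using that g(1) by blast
qed

lemma rescaled_iso_large:
  fixes x z :: "'n::finite flagtuple"
  assumes x: "x \<in> U r" and z: "z \<in> U r" and n: "r < CARD('n)" and resc: "rescaled r x z"
  obtains g where "linear g" "inj g" "maps_flags r g x z"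
proof -
  obtain s t where s: "\<And>i. i \<in> {1..r} \<Longrightarrow> s i \<noteq> 0" and t: "\<And>j. j \<in> {1..r} \<Longrightarrow> t j \<noteq> 0"
    and st: "\<And>i j. i \<in> {1..r} \<Longrightarrow> j \<in> {1..r} \<Longrightarrow>
       flag_form z i (flag_vec z j) = s i * flag_form x i (flag_vec x j) * t j"
    using rescaledD[OF resc] by blast
  have x_ft: "flag_tuple r x" and z_ft: "flag_tuple r z"
    using U_flag_tuple x z by blast+
  define W where "W = (\<Inter>i\<in>{1..r}. snd x i)"
  define W' where "W' = (\<Inter>i\<in>{1..r}. snd z i)"
  define V where "V = flag_vec x ` {1..r}"
  obtain B where B: "subspace W" "B \<subseteq> W" "independent B" "W \<subseteq> span B" "card B = dim W"
    "dim W = CARD('n) - r" "independent (V \<union> B)" "V \<inter> B = {}" "span (V \<union> B) = UNIV"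
    by (rule U_complement_basis[OF x n, folded W_def V_def])
  obtain B' where B': "subspace W'" "B' \<subseteq> W'" "independent B'" "W' \<subseteq> span B'" "card B' = dim W'"
    "dim W' = CARD('n) - r" "independent (flag_vec z ` {1..r} \<union> B')" "flag_vec z ` {1..r} \<inter> B' = {}"
    "span (flag_vec z ` {1..r} \<union> B') = UNIV"
    by (rule U_complement_basis[OF z n, folded W'_def])
  obtain h where h: "linear h" "h ` W = W'" "inj_on h W"
    using basis_to_basis_subspace_isomorphism[OF B(1) B'(1) _ B(2-5) B'(2-5)] B(6) B'(6) by auto
  have inj_V: "inj_on (flag_vec x) {1..r}"
    using U_independent(2)[OF x] n by (simp add: min_absorb2)
  define F where "F b = (if b \<in> B then h b else
      (1 / t (inv_into {1..r} (flag_vec x) b)) *\<^sub>R flag_vec z (inv_into {1..r} (flag_vec x) b))" for b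
  obtain g where g: "linear g" "\<forall>b\<in>V \<union> B. g b = F b"
    using linear_independent_extend[OF B(7)] by blast
  have vec: "g (flag_vec x j) = (1 / t j) *\<^sub>R flag_vec z j" if j: "j \<in> {1..r}" for j
  proof -
    have "flag_vec x j \<in> V"
      using j unfolding V_def by blast
    moreover from this have "flag_vec x j \<notin> B"
      using B(8) by blast
    ultimately show ?thesis
      using g(2) inv_into_f_f[OF inj_V j] unfolding F_def by simp
  qed
  have on_W: "g u = h u" if "u \<in> W" for u
  proof (rule linear_eq_on_span[OF g(1) h(1)])
    show "u \<in> span B"
      using that B(4) by blast
    show "g b = h b" if "b \<in> B" for b
      using that g(2) unfolding F_def by simp
  qed
  have form: "flag_form z i (g u) = s i * flag_form x i u" if i: "i \<in> {1..r}" for i u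
  proof (rule linear_eq_on_span[of _ _ "V \<union> B"])
    show "linear (\<lambda>u. flag_form z i (g u))"
      using linear_compose[OF g(1) flag_form(1)[OF z_ft i]] by (simp add: o_def)
    show "linear (\<lambda>u. s i * flag_form x i u)"
      using linear_compose[OF flag_form(1)[OF x_ft i] linear_scaleR, of "s i"] by (simp add: o_def)
    show "u \<in> span (V \<union> B)"
      using B(9) by simp
    fix b assume b: "b \<in> V \<union> B"
    show "flag_form z i (g b) = s i * flag_form x i b"
    proof (cases "b \<in> B")
      case True
      then have "b \<in> W" "g b \<in> W'"
        using B(2) on_W h(2) by auto
      then have "b \<in> snd x i" "g b \<in> snd z i"
        using i unfolding W_def W'_def by blast+
      then show ?thesis
        using flag_form(2)[OF x_ft i, of b] flag_form(2)[OF z_ft i, of "g b"] by simp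
    next
      case False
      then obtain j where j: "j \<in> {1..r}" "b = flag_vec x j"
        using b unfolding V_def by blast
      have "flag_form z i (g b) = (1 / t j) * flag_form z i (flag_vec z j)"
        using vec[OF j(1)] j(2) linear_scale[OF flag_form(1)[OF z_ft i]] by simp
      also have "\<dots> = s i * flag_form x i b"
        using st[OF i j(1)] t[OF j(1)] j(2) by simp
      finally show ?thesis .
    qed
  qed
  have "inj g"
    unfolding linear_injective_0[OF g(1)]
  proof (intro allI impI)
    fix u assume "g u = 0"
    have "u \<in> snd x i" if "i \<in> {1..r}" for i
    proof -
      have "s i * flag_form x i u = 0"
        using form[OF that, of u] \<open>g u = 0\<close> linear_0[OF flag_form(1)[OF z_ft that]] by simp
      then show ?thesis
        using s[OF that] flag_form(2)[OF x_ft that] by simp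
    qed
    then have "u \<in> W"
      unfolding W_def by blast
    moreover have "h u = h 0"
      using on_W[OF \<open>u \<in> W\<close>] \<open>g u = 0\<close> linear_0[OF h(1)] by simp
    ultimately show "u = 0"
      using h(3) subspace_0[OF B(1)] by (auto dest: inj_onD)
  qed
  moreover have "maps_flags r g x z"
    by (rule maps_flags_if_rescaling[OF x_ft z_ft g(1) \<open>inj g\<close>]) (use vec form s t in auto)
  ultimately show thesis
    using that g(1) by blast
qed

text \<open>Scale a vector in the common kernel of the forms and fix the lines.\<close>

lemma stabilizer_any_det:
  fixes x :: "'n::finite flagtuple"
  assumes x: "x \<in> U r" and n: "r < CARD('n)" and a: "a \<noteq> 0"
  obtains k where "linear k" "det (matrix k) = a" "maps_flags r k x x"
proof -
  have x_ft: "flag_tuple r x"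
    using U_flag_tuple x by blast
  define W where "W = (\<Inter>i\<in>{1..r}. snd x i)"
  define V where "V = flag_vec x ` {1..r}"
  obtain B where B: "subspace W" "B \<subseteq> W" "independent B" "W \<subseteq> span B" "card B = dim W"
    "dim W = CARD('n) - r" "independent (V \<union> B)" "V \<inter> B = {}" "span (V \<union> B) = UNIV"
    by (rule U_complement_basis[OF x n, folded W_def V_def])
  have "B \<noteq> {}"
    using B(5,6) n by auto
  then obtain b0 where b0: "b0 \<in> B"
    by blast
  define d where "d b = (if b = b0 then a else 1)" for b
  obtain k where k: "linear k" "\<forall>b\<in>V \<union> B. k b = d b *\<^sub>R b"
    using linear_independent_extend[OF B(7), of "\<lambda>b. d b *\<^sub>R b"] by blast
  have "card (V \<union> B) = CARD('n)"
    using dim_span_eq_card_independent[OF B(7)] B(9) by simp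
  then have "det (matrix k) = (\<Prod>b\<in>V \<union> B. d b)"
    by (rule det_matrix_eigenbasis[OF k(1) B(7)]) (use k(2) in simp)
  also have "\<dots> = a"
  proof -
    have "finite (V \<union> B)"
      using B(7) independent_explicit by blast
    then show ?thesis
      unfolding d_def using b0 by (simp add: prod.If_cases)
  qed
  finally have det: "det (matrix k) = a" .
  then have "inj k"
    using det_nz_iff_inj[OF k(1)] a by simp
  have vec: "k (flag_vec x j) = 1 *\<^sub>R flag_vec x j" if "j \<in> {1..r}" for j
  proof -
    have "flag_vec x j \<in> V"
      using that unfolding V_def by blast
    moreover from this have "flag_vec x j \<noteq> b0"
      using B(8) b0 by blast
    ultimately show ?thesis
      using k(2) unfolding d_def by simp
  qed
  have form: "flag_form x i (k u) = 1 * flag_form x i u" if i: "i \<in> {1..r}" for i u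
  proof (rule linear_eq_on_span[of _ _ "V \<union> B"])
    show "linear (\<lambda>u. flag_form x i (k u))"
      using linear_compose[OF k(1) flag_form(1)[OF x_ft i]] by (simp add: o_def)
    show "linear (\<lambda>u. 1 * flag_form x i u)"
      using flag_form(1)[OF x_ft i] by simp
    show "u \<in> span (V \<union> B)"
      using B(9) by simp
    fix b assume b: "b \<in> V \<union> B"
    have "b0 \<in> snd x i"
      using b0 B(2) i unfolding W_def by blast
    then have "flag_form x i b0 = 0"
      using flag_form(2)[OF x_ft i] by blast
    then show "flag_form x i (k b) = 1 * flag_form x i b"
      using k(2) b linear_scale[OF flag_form(1)[OF x_ft i]] unfolding d_def by (cases "b = b0") simp_all
  qed
  have "maps_flags r k x x"
    by (rule maps_flags_if_rescaling[OF x_ft x_ft k(1) \<open>inj k\<close>]) (use vec form in auto)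
  then show thesis
    using that k(1) det by blast
qed

section \<open>Orbits\<close>

lemma same_orbit_iff_maps_flags:
  "same_orbit r x y \<longleftrightarrow> (\<exists>M :: real^'n^'n. det M = 1 \<and> maps_flags r ((*v) M) x (y::'n::finite flagtuple))"
  unfolding same_orbit_def maps_flags_def ..

lemma maps_flags_comp: "maps_flags r k x y \<Longrightarrow> maps_flags r g y z \<Longrightarrow> maps_flags r (g \<circ> k) x z"
  unfolding maps_flags_def image_comp[symmetric] by simp

lemma same_orbit_if_maps_flags:
  fixes g :: "real^'n \<Rightarrow> real^'n" and x :: "'n::finite flagtuple"
  assumes g: "linear g" "det (matrix g) \<noteq> 0" "odd CARD('n) \<or> det (matrix g) > 0"
    and x: "flag_tuple r x" and maps: "maps_flags r g x z"
  shows "same_orbit r x z"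
proof -
  obtain M :: "real^'n^'n" where M: "det M = 1" "\<And>S. subspace S \<Longrightarrow> (*v) M ` S = g ` S"
    using det_one_on_subspaces[OF g] by blast
  have "maps_flags r ((*v) M) x z"
    using maps M(2) flag_tupleD(1,3)[OF x] unfolding maps_flags_def by simp
  then show ?thesis
    unfolding same_orbit_iff_maps_flags using M(1) by blast
qed

lemma eigenvalues_eq_if_kernel_invariant:
  fixes \<phi> :: "'a::real_vector \<Rightarrow> real"
  assumes lin: "linear \<phi>" "linear k" and inv: "\<And>u. \<phi> u = 0 \<Longrightarrow> \<phi> (k u) = 0"
    and eigen: "k v = m *\<^sub>R v" "k w = m' *\<^sub>R w" and nz: "\<phi> v \<noteq> 0" "\<phi> w \<noteq> 0"
  shows "m = m'"
proof -
  define u where "u = \<phi> w *\<^sub>R v - \<phi> v *\<^sub>R w"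
  have "\<phi> u = 0"
    unfolding u_def by (simp add: linear_diff[OF lin(1)] linear_scale[OF lin(1)])
  then have "\<phi> (k u) = 0"
    by (rule inv)
  moreover have "\<phi> (k u) = \<phi> v * \<phi> w * (m - m')"
    unfolding u_def using eigen
    by (simp add: linear_diff[OF lin(1)] linear_scale[OF lin(1)] linear_diff[OF lin(2)]
        linear_scale[OF lin(2)] algebra_simps)
  ultimately show ?thesis
    using nz by simp
qed

text \<open>The lines contain a basis, and for any two of them some third hyperplane contains neither,
  which forces k to have the same eigenvalue on both.\<close>

lemma stabilizer_scalar:
  fixes x :: "'n::finite flagtuple"
  assumes x: "x \<in> U r" and r: "3 \<le> r" and n: "CARD('n) \<le> r" "2 \<le> CARD('n)"
    and k: "linear k" "maps_flags r k x x"
  obtains \<mu> where "\<And>u. k u = \<mu> *\<^sub>R u"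
proof -
  have x_ft: "flag_tuple r x"
    using U_flag_tuple x by blast
  have "\<exists>m. k (flag_vec x j) = m *\<^sub>R flag_vec x j" if j: "j \<in> {1..r}" for j
  proof -
    have "k (flag_vec x j) \<in> span {flag_vec x j}"
      using k(2) j flag_vec(1,3)[OF x_ft j] unfolding maps_flags_def by blast
    then show ?thesis
      by (auto simp: span_singleton)
  qed
  then obtain m where m: "\<And>j. j \<in> {1..r} \<Longrightarrow> k (flag_vec x j) = m j *\<^sub>R flag_vec x j"
    by metis
  have m_eq: "m j = m j'" if j: "j \<in> {1..r}" "j' \<in> {1..r}" "j \<noteq> j'" for j j'
  proof -
    have "card ({1..r} - {j, j'}) \<noteq> 0"
      using r j by (simp add: card_Diff_subset)
    then obtain i where "i \<in> {1..r} - {j, j'}"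
      by (metis card.empty ex_in_conv)
    then have i: "i \<in> {1..r}" "i \<noteq> j" "i \<noteq> j'"
      by auto
    have "flag_form x i (k u) = 0" if "flag_form x i u = 0" for u
      using that k(2) i(1) flag_form(2)[OF x_ft i(1)] unfolding maps_flags_def by blast
    moreover have "flag_form x i (flag_vec x j) \<noteq> 0" "flag_form x i (flag_vec x j') \<noteq> 0"
      using U_flag_form_nonzero[OF x n(2) i(1)] j i(2,3) by auto
    ultimately show ?thesis
      by (rule eigenvalues_eq_if_kernel_invariant[OF flag_form(1)[OF x_ft i(1)] k(1) _ m[OF j(1)] m[OF j(2)]])
  qed
  define J where "J = {1..CARD('n)}"
  have J: "J \<subseteq> {1..r}" "independent (flag_vec x ` J)" "inj_on (flag_vec x) J"
    using U_independent[OF x] n unfolding J_def by (auto simp: min_absorb1)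
  have "card (flag_vec x ` J) = CARD('n)"
    using card_image[OF J(3)] unfolding J_def by simp
  then have spans: "u \<in> span (flag_vec x ` J)" for u
    using card_ge_dim_independent[OF _ J(2), of UNIV] by auto
  have "k u = m 1 *\<^sub>R u" for u
  proof (rule linear_eq_on_span[OF k(1) linear_scaleR _ spans])
    fix b assume "b \<in> flag_vec x ` J"
    then obtain j where "j \<in> {1..r}" "b = flag_vec x j"
      using J(1) by blast
    moreover have "m j = m 1"
      using m_eq[of j 1] r \<open>j \<in> {1..r}\<close> by (cases "j = 1") auto
    ultimately show "k b = m 1 *\<^sub>R b"
      using m by simp
  qed
  then show thesis
    using that by blast
qed

lemma same_orbit_if_theta_eq:
  fixes x z :: "'n::finite flagtuple"
  assumes n: "2 \<le> CARD('n)" and r: "3 \<le> r" and odd_or_large: "odd CARD('n) \<or> r < CARD('n)"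
    and x: "x \<in> U r" and z: "z \<in> U r" and theta: "theta_eq r x z"
  shows "same_orbit r x z"
proof -
  have resc: "rescaled r x z"
    using rescaled_if_theta_eq[OF x z r n theta] .
  show ?thesis
  proof (cases "r < CARD('n)")
    case True
    obtain g where g: "linear g" "inj g" "maps_flags r g x z"
      by (rule rescaled_iso_large[OF x z True resc])
    then have "det (matrix g) \<noteq> 0"
      using det_nz_iff_inj[OF g(1)] by simp
    then have "1 / det (matrix g) \<noteq> 0"
      by simp
    then obtain k where k: "linear k" "det (matrix k) = 1 / det (matrix g)" "maps_flags r k x x"
      by (rule stabilizer_any_det[OF x True])
    have "det (matrix (g \<circ> k)) = 1"
      unfolding matrix_compose[OF k(1) g(1)] det_mul k(2) using \<open>det (matrix g) \<noteq> 0\<close> by simp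
    then show ?thesis
      by (intro same_orbit_if_maps_flags[OF linear_compose[OF k(1) g(1)] _ _ U_flag_tuple[OF x]]
          maps_flags_comp[OF k(3) g(3)]) simp_all
  next
    case False
    then have "CARD('n) \<le> r" "odd CARD('n)"
      using odd_or_large by simp_all
    obtain g where g: "linear g" "inj g" "maps_flags r g x z"
      by (rule rescaled_iso_small[OF x z \<open>CARD('n) \<le> r\<close> resc])
    then have "det (matrix g) \<noteq> 0"
      using det_nz_iff_inj[OF g(1)] by simp
    then show ?thesis
      using same_orbit_if_maps_flags[OF g(1) _ _ U_flag_tuple[OF x] g(3)] \<open>odd CARD('n)\<close> by simp
  qed
qed

lemma theta_fibre_two_orbits:
  fixes x :: "'n::finite flagtuple"
  assumes n: "2 \<le> CARD('n)" "CARD('n) \<le> r" "even CARD('n)" and r: "3 \<le> r" and x: "x \<in> U r"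
  obtains y where "y \<in> U r" "theta_eq r x y" "\<not> same_orbit r x y"
    "\<And>z. z \<in> U r \<Longrightarrow> theta_eq r x z \<Longrightarrow> same_orbit r x z \<or> same_orbit r y z"
proof -
  have x_ft: "flag_tuple r x"
    using U_flag_tuple x by blast
  txt \<open>The reflection in an arbitrary coordinate, here the one named undefined.\<close>
  define D :: "real^'n^'n" where "D = (\<chi> i j. if i = j then (if i = undefined then -1 else 1) else 0)"
  have D: "D ** D = mat 1" "det D = -1"
    unfolding D_def by (rule diagonal_reflection)+
  define h where "h = (*v) D"
  have h_h: "h (h v) = v" for v
    unfolding h_def by (simp add: matrix_vector_mul_assoc D(1))
  have "inj h"
    using h_h by (metis injI)
  then have h: "linear h" "inj h" "matrix h = D"
    unfolding h_def by simp_all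
  define y where "y = flag_image h x"
  have y: "y \<in> U r" "theta_eq r x y"
    unfolding y_def using U_flag_image[OF h(1,2) x] r
    by (simp_all add: theta_eq_if_rescaled rescaled_flag_image[OF h(1,2) x_ft])
  have "maps_flags r h y x"
    unfolding maps_flags_def y_def by (simp add: image_image h_h)
  txt \<open>An element of SL_n(R) carrying x to y would give, composed with h, a stabilizer of x of
    determinant -1; but the stabilizer consists of scalars, whose determinants are even powers.\<close>
  have "\<not> same_orbit r x y"
  proof
    assume "same_orbit r x y"
    then obtain M :: "real^'n^'n" where M: "det M = 1" "maps_flags r ((*v) M) x y"
      unfolding same_orbit_iff_maps_flags by blast
    have k: "linear (h \<circ> (*v) M)" "maps_flags r (h \<circ> (*v) M) x x"
      using maps_flags_comp[OF M(2) \<open>maps_flags r h y x\<close>] linear_compose[OF matrix_vector_mul_linear h(1)]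
      by simp_all
    obtain \<mu> where "\<And>u. (h \<circ> (*v) M) u = \<mu> *\<^sub>R u"
      using stabilizer_scalar[OF x r n(2,1) k] by blast
    then have "h \<circ> (*v) M = (*\<^sub>R) \<mu>"
      by auto
    then have "det (matrix (h \<circ> (*v) M)) = \<mu> ^ CARD('n)"
      by (simp add: det_matrix_scaleR)
    moreover have "det (matrix (h \<circ> (*v) M)) = -1"
      unfolding matrix_compose[OF matrix_vector_mul_linear h(1)] det_mul h(3) D(2) using M(1) by simp
    ultimately show False
      using n(3) zero_le_even_power[of "CARD('n)" \<mu>] by simp
  qed
  moreover have "same_orbit r x z \<or> same_orbit r y z" if z: "z \<in> U r" "theta_eq r x z" for z
  proof -
    obtain g where g: "linear g" "inj g" "maps_flags r g x z"
      by (rule rescaled_iso_small[OF x z(1) n(2) rescaled_if_theta_eq[OF x z(1) r n(1) z(2)]])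
    then have det_g: "det (matrix g) \<noteq> 0"
      using det_nz_iff_inj[OF g(1)] by simp
    show ?thesis
    proof (cases "det (matrix g) > 0")
      case True
      then show ?thesis
        using same_orbit_if_maps_flags[OF g(1) det_g _ x_ft g(3)] by simp
    next
      case False
      have "det (matrix (g \<circ> h)) = - det (matrix g)"
        unfolding matrix_compose[OF h(1) g(1)] det_mul h(3) D(2) by simp
      then have "det (matrix (g \<circ> h)) > 0"
        using False det_g by simp
      then have "same_orbit r y z"
        by (intro same_orbit_if_maps_flags[OF linear_compose[OF h(1) g(1)] _ _ U_flag_tuple[OF y(1)]]
            maps_flags_comp[OF \<open>maps_flags r h y x\<close> g(3)]) simp_all
      then show ?thesis
        by simp
    qed
  qed
  ultimately show thesis
    using that[OF y] by blast
qed

theorem proposition4p11: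
  fixes r :: nat
  assumes "CARD('n::finite) \<ge> 3" and "r \<ge> 3"
  shows "((odd CARD('n) \<or> CARD('n) > r) \<longrightarrow>
            (\<forall>x y :: 'n flagtuple. x \<in> U r \<and> y \<in> U r \<and> theta_eq r x y \<longrightarrow> same_orbit r x y))
       \<and> ((CARD('n) \<le> r \<and> even CARD('n)) \<longrightarrow>
            (\<forall>x :: 'n flagtuple. x \<in> U r \<longrightarrow>
               (\<exists>y \<in> U r. theta_eq r x y \<and> \<not> same_orbit r x y \<and>
                  (\<forall>z \<in> U r. theta_eq r x z \<longrightarrow> same_orbit r x z \<or> same_orbit r y z))))"
proof (intro conjI impI allI)
  have n: "2 \<le> CARD('n)"
    using assms(1) by simp
  show "same_orbit r x y"
    if "odd CARD('n) \<or> CARD('n) > r" "x \<in> U r \<and> y \<in> U r \<and> theta_eq r x y" for x y :: "'n flagtuple"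
    using same_orbit_if_theta_eq[OF n assms(2)] that by blast
  show "\<exists>y \<in> U r. theta_eq r x y \<and> \<not> same_orbit r x y \<and>
      (\<forall>z \<in> U r. theta_eq r x z \<longrightarrow> same_orbit r x z \<or> same_orbit r y z)"
    if "CARD('n) \<le> r \<and> even CARD('n)" "x \<in> U r" for x :: "'n flagtuple"
    using theta_fibre_two_orbits[OF n _ _ assms(2) that(2)] that(1) by (metis (no_types, lifting))
qed

end
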